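(* Let $K$ be a division ring and $\Gamma$ a group. If the group ring $K[\Gamma\times H]$ is directly finite for every finite group $H$, then $K[\Gamma]$ is stably finite.
   Context: For a division ring $K$ and a group $G$, $K[G]$ denotes the group ring (the $K$-algebra with basis $G$, coefficients from $K$ commuting with the elements of $G$). A unital ring $A$ is directly finite if $ab=1$ implies $ba=1$ for all $a,b\in A$; it is stably finite if the matrix ring $M_n(A)$ is directly finite for every positive integer $n$. *)

theory Defs
  imports "HOL-Algebra.Algebra"
begin

definition group_ring :: "('g, 'b) monoid_scheme \<Rightarrow> ('g \<Rightarrow> 'k::division_ring) ring" where
  "group_ring G =
     \<lparr> partial_object.carrier = {f. finite {x. f x \<noteq> 0} \<and> (\<forall>x. x \<notin> carrier G \<longrightarrow> f x = 0)},
       monoid.mult = (\<lambda>f h. \<lambda>x. if x \<in> carrier G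
                         then (\<Sum>y\<in>{y. f y \<noteq> 0}. f y * h (inv\<^bsub>G\<^esub> y \<otimes>\<^bsub>G\<^esub> x))
                         else 0),
       monoid.one = (\<lambda>x. if x = \<one>\<^bsub>G\<^esub> then 1 else 0),
       ring.zero = (\<lambda>x. 0),
       ring.add = (\<lambda>f h. \<lambda>x. f x + h x) \<rparr>"

definition matrix_ring :: "('a, 'b) ring_scheme \<Rightarrow> nat \<Rightarrow> (nat \<Rightarrow> nat \<Rightarrow> 'a) ring" where
  "matrix_ring A n =
     \<lparr> partial_object.carrier = {M. (\<forall>i j. i < n \<and> j < n \<longrightarrow> M i j \<in> carrier A) \<and>
                     (\<forall>i j. \<not> (i < n \<and> j < n) \<longrightarrow> M i j = \<zero>\<^bsub>A\<^esub>)},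
       monoid.mult = (\<lambda>M N. \<lambda>i j. if i < n \<and> j < n
                         then (\<Oplus>\<^bsub>A\<^esub>k\<in>{..<n}. M i k \<otimes>\<^bsub>A\<^esub> N k j) else \<zero>\<^bsub>A\<^esub>),
       monoid.one = (\<lambda>i j. if i < n \<and> j = i then \<one>\<^bsub>A\<^esub> else \<zero>\<^bsub>A\<^esub>),
       ring.zero = (\<lambda>i j. \<zero>\<^bsub>A\<^esub>),
       ring.add = (\<lambda>M N. \<lambda>i j. if i < n \<and> j < n then M i j \<oplus>\<^bsub>A\<^esub> N i j else \<zero>\<^bsub>A\<^esub>) \<rparr>"

definition directly_finite :: "('a, 'b) monoid_scheme \<Rightarrow> bool" where
  "directly_finite A \<longleftrightarrow>
     (\<forall>a\<in>carrier A. \<forall>b\<in>carrier A. a \<otimes>\<^bsub>A\<^esub> b = \<one>\<^bsub>A\<^esub> \<longrightarrow> b \<otimes>\<^bsub>A\<^esub> a = \<one>\<^bsub>A\<^esub>)"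

definition stably_finite :: "('a, 'b) ring_scheme \<Rightarrow> bool" where
  "stably_finite A \<longleftrightarrow> (\<forall>n::nat. n \<ge> 1 \<longrightarrow> directly_finite (matrix_ring A n))"

end

theory Submission
  imports Defs "HOL-Library.Nat_Bijection"
begin

text \<open>
  It suffices to embed the matrix ring \<open>M\<^sub>n(K[\<Gamma>])\<close> unitally and injectively into a
  group ring \<open>K[\<Gamma> \<times> H]\<close> with \<open>H\<close> finite, since direct finiteness passes to such subrings.
  Take for \<open>H\<close> the wreath product \<open>\<int>\<^sub>q \<wr> \<int>\<^sub>n\<close>, i.e. \<open>\<int>\<^sub>q\<^sup>n \<rtimes> \<int>\<^sub>n\<close> with \<open>\<int>\<^sub>n\<close> cyclically
  permuting the coordinates, where \<open>q \<ge> 2\<close> is not zero in \<open>K\<close>. In \<open>\<int>[\<int>\<^sub>q\<^sup>n]\<close> the products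
  \<open>e\<^sub>j = \<sigma>\<^sub>j \<Prod>\<^bsub>i\<noteq>j\<^esub> (q - \<sigma>\<^sub>i)\<close>, with \<open>\<sigma>\<^sub>i\<close> the sum over the \<open>i\<close>-th factor, are orthogonal and
  satisfy \<open>e\<^sub>j\<^sup>2 = q\<^sup>n e\<^sub>j\<close>; the shift conjugates \<open>e\<^sub>j\<close> to \<open>e\<^sub>j\<^sub>+\<^sub>1\<close>. Hence the elements
  \<open>E\<^sub>i\<^sub>j\<close>, the translates of \<open>e\<^sub>j\<close> by the shift by \<open>i - j\<close>, are matrix units up to the factor
  \<open>D = q\<^sup>n\<close>, and \<open>X \<mapsto> D\<^sup>-\<^sup>1 (\<Sum> X\<^sub>i\<^sub>j \<otimes> E\<^sub>i\<^sub>j + 1 \<otimes> (D - \<Sum> E\<^sub>i\<^sub>i))\<close> is the required embedding.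
\<close>

definition conv :: "('g,'b) monoid_scheme \<Rightarrow> ('g \<Rightarrow> 'c::ring) \<Rightarrow> ('g \<Rightarrow> 'c) \<Rightarrow> 'g \<Rightarrow> 'c" where
 "conv G f h = (\<lambda>x. if x \<in> carrier G then (\<Sum>y\<in>{y. f y \<noteq> 0}. f y * h (inv\<^bsub>G\<^esub> y \<otimes>\<^bsub>G\<^esub> x)) else 0)"

definition gr_elem :: "('g,'b) monoid_scheme \<Rightarrow> ('g \<Rightarrow> 'c::zero) \<Rightarrow> bool" where
 "gr_elem G f \<longleftrightarrow> finite {x. f x \<noteq> 0} \<and> (\<forall>x. x \<notin> carrier G \<longrightarrow> f x = 0)"

definition gr_unit :: "('g,'b) monoid_scheme \<Rightarrow> 'g \<Rightarrow> 'c::{zero,one}" where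
 "gr_unit G = (\<lambda>x. if x = \<one>\<^bsub>G\<^esub> then 1 else 0)"

lemma gr_carrier: "carrier (group_ring G) = {f. gr_elem G f}"
  by (simp add: group_ring_def gr_elem_def)

lemma gr_mult: "f \<otimes>\<^bsub>group_ring G\<^esub> h = conv G f h"
  by (simp add: group_ring_def conv_def)

lemma gr_one: "\<one>\<^bsub>group_ring G\<^esub> = gr_unit G"
  by (simp add: group_ring_def gr_unit_def)

lemma gr_zero: "\<zero>\<^bsub>group_ring G\<^esub> = (\<lambda>x. 0)"
  by (simp add: group_ring_def)

lemma gr_add: "f \<oplus>\<^bsub>group_ring G\<^esub> h = (\<lambda>x. f x + h x)"
  by (simp add: group_ring_def)

lemma gr_elem_finite: "gr_elem G f \<Longrightarrow> finite {x. f x \<noteq> 0}"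
  by (simp add: gr_elem_def)

lemma gr_elem_zero: "gr_elem G (\<lambda>x. 0)"
  by (simp add: gr_elem_def)

lemma (in group) gr_elem_unit: "gr_elem G (gr_unit G :: 'a \<Rightarrow> 'c::zero_neq_one)"
  by (auto simp: gr_elem_def gr_unit_def)

lemma gr_elem_add:
  fixes f h :: "'a \<Rightarrow> 'c::monoid_add"
  assumes "gr_elem G f" "gr_elem G h"
  shows "gr_elem G (\<lambda>x. f x + h x)"
proof -
  have "{x. f x + h x \<noteq> 0} \<subseteq> {x. f x \<noteq> 0} \<union> {x. h x \<noteq> 0}" by auto
  then show ?thesis using assms unfolding gr_elem_def by (auto intro: finite_subset)
qed

lemma gr_elem_sum:
  "finite I \<Longrightarrow> (\<And>a. a \<in> I \<Longrightarrow> gr_elem G (f a)) \<Longrightarrow> gr_elem G (\<lambda>x. \<Sum>a\<in>I. f a x)"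
  by (induction I rule: finite_induct) (simp_all add: gr_elem_zero gr_elem_add)

lemma gr_elem_smult: "gr_elem G f \<Longrightarrow> gr_elem G (\<lambda>x. (c::'c::ring) * f x)"
  unfolding gr_elem_def by (auto elim: finite_subset[rotated])

lemma abelian_monoid_group_ring: "abelian_monoid (group_ring G)"
  by (rule abelian_monoidI) (simp_all add: gr_carrier gr_add gr_zero gr_elem_zero gr_elem_add ac_simps)

lemma finsum_group_ring:
  assumes "finite I" "\<And>i. i \<in> I \<Longrightarrow> gr_elem G (f i)"
  shows "finsum (group_ring G) f I = (\<lambda>x. \<Sum>i\<in>I. f i x)"
  using assms
proof (induction I rule: finite_induct)
  case empty
  then show ?case using abelian_monoid.finsum_empty[OF abelian_monoid_group_ring] by (simp add: gr_zero)
next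
  case (insert a I)
  have "finsum (group_ring G) f (insert a I) = f a \<oplus>\<^bsub>group_ring G\<^esub> finsum (group_ring G) f I"
    by (rule abelian_monoid.finsum_insert[OF abelian_monoid_group_ring])
      (use insert in \<open>auto simp: gr_carrier\<close>)
  then show ?case using insert by (simp add: gr_add)
qed

lemma conv_superset:
  assumes "finite S" "{y. f y \<noteq> 0} \<subseteq> S"
  shows "conv G f h x = (if x \<in> carrier G then (\<Sum>y\<in>S. f y * h (inv\<^bsub>G\<^esub> y \<otimes>\<^bsub>G\<^esub> x)) else 0)"
  unfolding conv_def using assms by (auto intro!: sum.mono_neutral_left)

lemma conv_add_left:
  assumes "finite {y. f y \<noteq> 0}" "finite {y. f' y \<noteq> 0}"
  shows "conv G (\<lambda>x. f x + f' x) h = (\<lambda>x. conv G f h x + conv G f' h x)"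
proof
  fix x
  let ?S = "{y. f y \<noteq> 0} \<union> {y. f' y \<noteq> 0}"
  have fS: "finite ?S" using assms by simp
  have s: "{y. f y + f' y \<noteq> 0} \<subseteq> ?S" by auto
  show "conv G (\<lambda>x. f x + f' x) h x = conv G f h x + conv G f' h x"
  proof -
    have e1: "conv G f h x = (if x \<in> carrier G then (\<Sum>y\<in>?S. f y * h (inv\<^bsub>G\<^esub> y \<otimes>\<^bsub>G\<^esub> x)) else 0)"
      by (rule conv_superset[OF fS]) auto
    have e2: "conv G f' h x = (if x \<in> carrier G then (\<Sum>y\<in>?S. f' y * h (inv\<^bsub>G\<^esub> y \<otimes>\<^bsub>G\<^esub> x)) else 0)"
      by (rule conv_superset[OF fS]) auto
    show ?thesis unfolding conv_superset[OF fS s] e1 e2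
      by (auto simp: distrib_right sum.distrib)
  qed
qed

lemma conv_diff_left:
  assumes "finite {y. f y \<noteq> 0}" "finite {y. f' y \<noteq> 0}"
  shows "conv G (\<lambda>x. f x - f' x) h = (\<lambda>x. conv G f h x - conv G f' h x)"
proof
  fix x
  let ?S = "{y. f y \<noteq> 0} \<union> {y. f' y \<noteq> 0}"
  have fS: "finite ?S" using assms by simp
  have s: "{y. f y - f' y \<noteq> 0} \<subseteq> ?S" by auto
  show "conv G (\<lambda>x. f x - f' x) h x = conv G f h x - conv G f' h x"
  proof -
    have e1: "conv G f h x = (if x \<in> carrier G then (\<Sum>y\<in>?S. f y * h (inv\<^bsub>G\<^esub> y \<otimes>\<^bsub>G\<^esub> x)) else 0)"
      by (rule conv_superset[OF fS]) auto
    have e2: "conv G f' h x = (if x \<in> carrier G then (\<Sum>y\<in>?S. f' y * h (inv\<^bsub>G\<^esub> y \<otimes>\<^bsub>G\<^esub> x)) else 0)"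
      by (rule conv_superset[OF fS]) auto
    show ?thesis unfolding conv_superset[OF fS s] e1 e2
      by (auto simp: left_diff_distrib sum_subtractf)
  qed
qed

lemma conv_add_right:
  "conv G f (\<lambda>x. h x + h' x) = (\<lambda>x. conv G f h x + conv G f h' x)"
  by (auto simp: conv_def distrib_left sum.distrib)

lemma conv_diff_right:
  "conv G f (\<lambda>x. h x - h' x) = (\<lambda>x. conv G f h x - conv G f h' x)"
  by (auto simp: conv_def right_diff_distrib sum_subtractf)

lemma conv_sum_right:
  "conv G f (\<lambda>x. \<Sum>a\<in>I. h a x) = (\<lambda>x. \<Sum>a\<in>I. conv G f (h a) x)"
proof
  fix x show "conv G f (\<lambda>x. \<Sum>a\<in>I. h a x) x = (\<Sum>a\<in>I. conv G f (h a) x)"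
    by (simp add: conv_def sum_distrib_left sum.swap[of _ I])
qed

lemma fin_supp_sum:
  assumes "finite I" "\<And>a. a \<in> I \<Longrightarrow> finite {x. f a x \<noteq> 0}"
  shows "finite {x. (\<Sum>a\<in>I. f a x) \<noteq> (0::'c::comm_monoid_add)}"
proof -
  have "{x. (\<Sum>a\<in>I. f a x) \<noteq> 0} \<subseteq> (\<Union>a\<in>I. {x. f a x \<noteq> 0})"
    by (auto elim: sum.not_neutral_contains_not_neutral)
  thus ?thesis using assms by (meson finite_UN_I finite_subset)
qed

lemma conv_zero_left: "conv G (\<lambda>x. 0) h = (\<lambda>x. 0)"
  by (rule ext) (simp add: conv_def)

lemma conv_sum_left:
  assumes "finite I" "\<And>a. a \<in> I \<Longrightarrow> finite {x. f a x \<noteq> 0}"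
  shows "conv G (\<lambda>x. \<Sum>a\<in>I. f a x) h = (\<lambda>x. \<Sum>a\<in>I. conv G (f a) h x)"
  using assms
proof (induction I rule: finite_induct)
  case empty
  then show ?case by (simp add: conv_zero_left)
next
  case (insert a I)
  have "conv G (\<lambda>x. \<Sum>b\<in>insert a I. f b x) h = conv G (\<lambda>x. f a x + (\<Sum>b\<in>I. f b x)) h"
    using insert by simp
  also have "\<dots> = (\<lambda>x. conv G (f a) h x + conv G (\<lambda>x. \<Sum>b\<in>I. f b x) h x)"
    by (rule conv_add_left) (use insert fin_supp_sum in auto)
  finally show ?case using insert by simp
qed

lemma conv_smult_left:
  assumes "finite {y. f y \<noteq> 0}"
  shows "conv G (\<lambda>x. c * f x) h = (\<lambda>x. c * conv G f h x)"
proof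
  fix x
  have s: "{y. c * f y \<noteq> 0} \<subseteq> {y. f y \<noteq> 0}" by auto
  show "conv G (\<lambda>x. c * f x) h x = c * conv G f h x"
    unfolding conv_superset[OF assms(1) s] by (auto simp: conv_def sum_distrib_left mult.assoc)
qed

lemma conv_smult_right:
  assumes "\<And>z. z * c = c * z"
  shows "conv G f (\<lambda>x. c * h x) = (\<lambda>x. c * conv G f h x)"
proof
  fix x
  have "\<And>y. f y * (c * h (inv\<^bsub>G\<^esub> y \<otimes>\<^bsub>G\<^esub> x)) = c * (f y * h (inv\<^bsub>G\<^esub> y \<otimes>\<^bsub>G\<^esub> x))"
    by (metis assms mult.assoc)
  then show "conv G f (\<lambda>x. c * h x) x = c * conv G f h x"
    by (simp add: conv_def sum_distrib_left)
qed

lemma conv_zero_right: "conv G f (\<lambda>x. 0) = (\<lambda>x. 0)"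
  by (rule ext) (simp add: conv_def)

lemma (in group) conv_unit_left:
  fixes h :: "'a \<Rightarrow> 'c::ring_1"
  assumes "gr_elem G h"
  shows "conv G (gr_unit G) h = h"
proof
  fix x
  have "{y. gr_unit G y \<noteq> (0::'c)} = {\<one>}" by (auto simp: gr_unit_def)
  then show "conv G (gr_unit G) h x = h x"
    using assms by (auto simp: conv_def gr_unit_def gr_elem_def)
qed

lemma (in group) conv_unit_right:
  fixes f :: "'a \<Rightarrow> 'c::ring_1"
  assumes "gr_elem G f"
  shows "conv G f (gr_unit G) = f"
proof
  fix x
  have fin: "finite {y. f y \<noteq> 0}" and out: "\<And>y. y \<notin> carrier G \<Longrightarrow> f y = 0"
    using assms by (auto simp: gr_elem_def)
  show "conv G f (gr_unit G) x = f x"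
  proof (cases "x \<in> carrier G")
    case True
    have "(\<Sum>y\<in>{y. f y \<noteq> 0}. f y * gr_unit G (inv y \<otimes> x)) = (\<Sum>y\<in>{y. f y \<noteq> 0}. if y = x then f y else 0)"
    proof (rule sum.cong)
      fix y assume "y \<in> {y. f y \<noteq> 0}"
      then have y: "y \<in> carrier G" using out by auto
      have "inv y \<otimes> x = \<one> \<longleftrightarrow> x = y"
        using inv_solve_left'[OF one_closed y True] y by simp
      thus "f y * gr_unit G (inv y \<otimes> x) = (if y = x then f y else 0)" by (auto simp: gr_unit_def)
    qed simp
    also have "\<dots> = f x" using fin by (simp add: sum.delta')
    finally show ?thesis using True by (simp add: conv_def)
  next
    case False thus ?thesis using out by (simp add: conv_def)
  qed
qed

lemma (in group) gr_elem_conv: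
  assumes "gr_elem G f" "gr_elem G h"
  shows "gr_elem G (conv G f h)"
proof -
  let ?P = "(\<lambda>(y,z). y \<otimes> z) ` ({y. f y \<noteq> 0} \<times> {z. h z \<noteq> 0})"
  have "{x. conv G f h x \<noteq> 0} \<subseteq> ?P"
  proof
    fix x assume "x \<in> {x. conv G f h x \<noteq> 0}"
    then have x: "x \<in> carrier G" and ne: "(\<Sum>y\<in>{y. f y \<noteq> 0}. f y * h (inv y \<otimes> x)) \<noteq> 0"
      by (auto simp: conv_def split: if_splits)
    from sum.not_neutral_contains_not_neutral[OF ne] obtain y where
      y: "f y \<noteq> 0" "f y * h (inv y \<otimes> x) \<noteq> 0" by auto
    have yc: "y \<in> carrier G" using y assms(1) by (auto simp: gr_elem_def)
    have "h (inv y \<otimes> x) \<noteq> 0" using y by auto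
    moreover have "x = y \<otimes> (inv y \<otimes> x)" using yc x by (simp add: m_assoc[symmetric])
    ultimately show "x \<in> ?P" using y by (auto intro!: image_eqI[of _ _ "(y, inv y \<otimes> x)"])
  qed
  moreover have "finite ?P" using assms by (auto simp: gr_elem_def)
  ultimately have "finite {x. conv G f h x \<noteq> 0}" using finite_subset by blast
  thus ?thesis by (auto simp: gr_elem_def conv_def)
qed

text \<open>The wreath product \<open>\<int>\<^sub>q \<wr> \<int>\<^sub>n\<close> on pairs (shift, vector), transported to \<open>nat\<close> by \<open>wr_enc\<close>
  because the hypothesis of the theorem only speaks about groups with carrier in \<open>nat\<close>.\<close>

definition wr_vecs :: "nat \<Rightarrow> nat \<Rightarrow> (nat \<Rightarrow> nat) set" where
  "wr_vecs n q = PiE {..<n} (\<lambda>_. {..<q})"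

definition wr_enc :: "nat \<Rightarrow> nat \<times> (nat \<Rightarrow> nat) \<Rightarrow> nat" where
  "wr_enc n p = prod_encode (fst p, list_encode (map (snd p) [0..<n]))"

definition wr_dec :: "nat \<Rightarrow> nat \<Rightarrow> nat \<times> (nat \<Rightarrow> nat)" where
  "wr_dec n x = (fst (prod_decode x), \<lambda>i. if i < n then list_decode (snd (prod_decode x)) ! i else undefined)"

definition wr_mult :: "nat \<Rightarrow> nat \<Rightarrow> nat \<times> (nat \<Rightarrow> nat) \<Rightarrow> nat \<times> (nat \<Rightarrow> nat) \<Rightarrow> nat \<times> (nat \<Rightarrow> nat)" where
  "wr_mult n q a b = ((fst a + fst b) mod n,
      \<lambda>i. if i < n then (snd a ((i + fst b) mod n) + snd b i) mod q else undefined)"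

definition wr_pairs :: "nat \<Rightarrow> nat \<Rightarrow> (nat \<times> (nat \<Rightarrow> nat)) set" where
  "wr_pairs n q = {..<n} \<times> wr_vecs n q"

definition wr_zero :: "nat \<Rightarrow> nat \<Rightarrow> nat" where
  "wr_zero n = (\<lambda>i. if i < n then 0 else undefined)"

definition wreath :: "nat \<Rightarrow> nat \<Rightarrow> nat monoid" where
  "wreath n q = \<lparr>partial_object.carrier = wr_enc n ` wr_pairs n q, monoid.mult = (\<lambda>a b. wr_enc n (wr_mult n q (wr_dec n a) (wr_dec n b))),
             monoid.one = wr_enc n (0, wr_zero n)\<rparr>"

lemma wr_dec_enc:
  assumes "p \<in> wr_pairs n q" shows "wr_dec n (wr_enc n p) = p"
proof (cases p)
  case (Pair d v)
  then have "\<forall>i. \<not> i < n \<longrightarrow> v i = undefined" using assms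
    unfolding wr_pairs_def wr_vecs_def PiE_def extensional_def by auto
  then show ?thesis by (simp add: Pair wr_dec_def wr_enc_def fun_eq_iff)
qed

lemma inj_on_wr_enc: "inj_on (wr_enc n) (wr_pairs n q)"
  by (metis wr_dec_enc inj_onI)

lemma wr_mult_closed:
  assumes "0 < n" "0 < q" "a \<in> wr_pairs n q" "b \<in> wr_pairs n q"
  shows "wr_mult n q a b \<in> wr_pairs n q"
  using assms unfolding wr_mult_def wr_pairs_def wr_vecs_def by (auto simp: PiE_iff extensional_def)

lemma wr_unit_in_pairs: "0 < n \<Longrightarrow> 0 < q \<Longrightarrow> (0, wr_zero n) \<in> wr_pairs n q"
  unfolding wr_pairs_def wr_vecs_def wr_zero_def by (auto simp: PiE_iff extensional_def)

lemma wr_mult_assoc: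
  assumes "0 < n" "a \<in> wr_pairs n q" "b \<in> wr_pairs n q" "c \<in> wr_pairs n q"
  shows "wr_mult n q (wr_mult n q a b) c = wr_mult n q a (wr_mult n q b c)"
proof -
  obtain d v d' v' d'' v'' where e: "a = (d, v)" "b = (d', v')" "c = (d'', v'')"
    by (metis prod.exhaust)
  have 1: "((d + d') mod n + d'') mod n = (d + (d' + d'') mod n) mod n"
    by (simp add: mod_add_left_eq mod_add_right_eq add.assoc)
  have 2: "((v (((i + d'') mod n + d') mod n) + v' ((i + d'') mod n)) mod q + v'' i) mod q
        = (v ((i + (d' + d'') mod n) mod n) + (v' ((i + d'') mod n) + v'' i) mod q) mod q" for i
  proof -
    have "((i + d'') mod n + d') mod n = (i + (d' + d'') mod n) mod n"
      by (simp add: mod_add_left_eq mod_add_right_eq ac_simps)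
    thus ?thesis by (simp add: mod_add_left_eq mod_add_right_eq ac_simps)
  qed
  show ?thesis unfolding e wr_mult_def fst_conv snd_conv
    by (simp add: 1 2 fun_eq_iff \<open>0 < n\<close>)
qed

lemma wr_mult_unit_left:
  assumes "a \<in> wr_pairs n q"
  shows "wr_mult n q (0, wr_zero n) a = a"
proof -
  obtain d v where e: "a = (d, v)" by (metis prod.exhaust)
  have d: "d < n" and v: "\<And>i. i < n \<Longrightarrow> v i < q" and u: "\<And>i. \<not> i < n \<Longrightarrow> v i = undefined"
    using assms e by (auto simp: wr_pairs_def wr_vecs_def PiE_def extensional_def)
  show ?thesis unfolding e wr_mult_def using d v u by (auto simp: wr_zero_def fun_eq_iff)
qed

lemma mod_shift_back: "i < n \<Longrightarrow> d < (n::nat) \<Longrightarrow> ((i + d) mod n + n - d) mod n = i"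
proof (cases "i + d < n")
  case True
  assume "i < n" "d < n"
  then show ?thesis using True by simp
next
  case False
  assume a: "i < n" "d < n"
  then have "(i + d) mod n = i + d - n" using False
    by (simp add: le_mod_geq)
  then show ?thesis using a False by simp
qed

definition wr_inv :: "nat \<Rightarrow> nat \<Rightarrow> nat \<times> (nat \<Rightarrow> nat) \<Rightarrow> nat \<times> (nat \<Rightarrow> nat)" where
  "wr_inv n q a = ((n - fst a) mod n, \<lambda>i. if i < n then (q - snd a ((i + n - fst a) mod n)) mod q else undefined)"

lemma wr_inv_closed: "0 < n \<Longrightarrow> 0 < q \<Longrightarrow> a \<in> wr_pairs n q \<Longrightarrow> wr_inv n q a \<in> wr_pairs n q"
  unfolding wr_inv_def wr_pairs_def wr_vecs_def by (auto simp: PiE_iff extensional_def)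

lemma wr_mult_inv_left:
  assumes "0 < n" "a \<in> wr_pairs n q"
  shows "wr_mult n q (wr_inv n q a) a = (0, wr_zero n)"
proof -
  obtain d v where e: "a = (d, v)" by (metis prod.exhaust)
  have d: "d < n" and v: "\<And>i. i < n \<Longrightarrow> v i < q" using assms e by (auto simp: wr_pairs_def wr_vecs_def)
  have 1: "((n - d) mod n + d) mod n = 0"
    by (simp add: mod_add_left_eq d less_imp_le_nat)
  have 2: "((q - v (((i + d) mod n + n - d) mod n)) mod q + v i) mod q = 0" if "i < n" for i
  proof -
    have "((q - v i) mod q + v i) mod q = 0" using v[OF that] by (simp add: mod_add_left_eq)
    then show ?thesis using mod_shift_back[OF that d] by simp
  qed
  show ?thesis unfolding e wr_mult_def wr_inv_def using 1 2 by (auto simp: wr_zero_def fun_eq_iff)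
qed

lemma wreath_mult: "a \<in> wr_pairs n q \<Longrightarrow> b \<in> wr_pairs n q \<Longrightarrow> wr_enc n a \<otimes>\<^bsub>wreath n q\<^esub> wr_enc n b = wr_enc n (wr_mult n q a b)"
  by (simp add: wreath_def wr_dec_enc)

lemma wreath_one: "\<one>\<^bsub>wreath n q\<^esub> = wr_enc n (0, wr_zero n)"
  by (simp add: wreath_def)

lemma wreath_carrier: "carrier (wreath n q) = wr_enc n ` wr_pairs n q"
  by (simp add: wreath_def)

lemma group_wreath:
  assumes "0 < n" "0 < q"
  shows "group (wreath n q)"
proof (rule groupI)
  show "\<one>\<^bsub>wreath n q\<^esub> \<in> carrier (wreath n q)" using wr_unit_in_pairs[OF assms] by (simp add: wreath_def)
next
  fix x y assume "x \<in> carrier (wreath n q)" "y \<in> carrier (wreath n q)"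
  then show "x \<otimes>\<^bsub>wreath n q\<^esub> y \<in> carrier (wreath n q)"
    using wr_mult_closed[OF assms] by (auto simp: wreath_def wr_dec_enc)
next
  fix x y z assume "x \<in> carrier (wreath n q)" "y \<in> carrier (wreath n q)" "z \<in> carrier (wreath n q)"
  then obtain a b c where abc: "a \<in> wr_pairs n q" "b \<in> wr_pairs n q" "c \<in> wr_pairs n q" "x = wr_enc n a" "y = wr_enc n b" "z = wr_enc n c"
    by (auto simp: wreath_def)
  show "x \<otimes>\<^bsub>wreath n q\<^esub> y \<otimes>\<^bsub>wreath n q\<^esub> z = x \<otimes>\<^bsub>wreath n q\<^esub> (y \<otimes>\<^bsub>wreath n q\<^esub> z)"
  proof -
    have "wr_mult n q a b \<in> wr_pairs n q" "wr_mult n q b c \<in> wr_pairs n q" using abc wr_mult_closed[OF assms] by auto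
    then show ?thesis using abc by (simp add: wreath_mult wr_mult_assoc[OF assms(1)])
  qed
next
  fix x assume "x \<in> carrier (wreath n q)"
  then obtain a where a: "a \<in> wr_pairs n q" "x = wr_enc n a" by (auto simp: wreath_carrier)
  show "\<one>\<^bsub>wreath n q\<^esub> \<otimes>\<^bsub>wreath n q\<^esub> x = x"
    using a wr_unit_in_pairs[OF assms] by (simp add: wreath_one wreath_mult wr_mult_unit_left)
next
  fix x assume "x \<in> carrier (wreath n q)"
  then obtain a where a: "a \<in> wr_pairs n q" "x = wr_enc n a" by (auto simp: wreath_def)
  show "\<exists>y\<in>carrier (wreath n q). y \<otimes>\<^bsub>wreath n q\<^esub> x = \<one>\<^bsub>wreath n q\<^esub>"
  proof
    show "wr_enc n (wr_inv n q a) \<in> carrier (wreath n q)" using wr_inv_closed[OF assms a(1)] by (simp add: wreath_carrier)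
    show "wr_enc n (wr_inv n q a) \<otimes>\<^bsub>wreath n q\<^esub> x = \<one>\<^bsub>wreath n q\<^esub>"
      using a wr_inv_closed[OF assms a(1)] wr_mult_inv_left[OF assms(1) a(1)] by (simp add: wreath_mult wreath_one)
  qed
qed

lemma finite_wreath: "finite (carrier (wreath n q))"
  by (simp add: wreath_def wr_pairs_def wr_vecs_def finite_PiE)

definition coset_prod :: "nat \<Rightarrow> nat \<Rightarrow> nat \<Rightarrow> (nat \<Rightarrow> nat \<Rightarrow> int) \<Rightarrow> nat \<Rightarrow> int" where
  "coset_prod n q d w x = (if x \<in> carrier (wreath n q) \<and> fst (wr_dec n x) = d then (\<Prod>i<n. w i (snd (wr_dec n x) i)) else 0)"

definition cyclic_conv :: "nat \<Rightarrow> (nat \<Rightarrow> int) \<Rightarrow> (nat \<Rightarrow> int) \<Rightarrow> nat \<Rightarrow> int" where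
  "cyclic_conv q f g b = (\<Sum>c<q. f c * g ((b + q - c) mod q))"

lemma mod_sub_cancel:
  assumes "(a + v) mod q = (u::nat)" "a < q" "v < q"
  shows "(u + q - a) mod q = v"
proof (cases "a + v < q")
  case True
  then have "u = a + v" using assms by simp
  then show ?thesis using assms by simp
next
  case False
  then have "u = a + v - q" using assms by (simp add: le_mod_geq)
  then have "u + q - a = v" using False by simp
  then show ?thesis using assms by simp
qed

lemma mod_add_less_cases: "a < n \<Longrightarrow> b < (n::nat) \<Longrightarrow> (a + b) mod n = (if a + b < n then a + b else a + b - n)"
  by (simp add: le_mod_geq)

lemma mod_add_left_cancel:
  assumes "(d + a) mod n = (d + b) mod (n::nat)" "a < n" "b < n" "d < n"
  shows "a = b"
  using assms mod_add_less_cases[of d n a] mod_add_less_cases[of d n b] by (auto split: if_splits)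

lemma mod_shift_forth: "j < n \<Longrightarrow> d < (n::nat) \<Longrightarrow> ((j + n - d) mod n + d) mod n = j"
  by (simp add: mod_add_left_eq)

lemma bij_betw_mod_shift: "d < (n::nat) \<Longrightarrow> bij_betw (\<lambda>i. (i + d) mod n) {..<n} {..<n}"
  by (rule bij_betw_byWitness[where f'="\<lambda>j. (j + n - d) mod n"]) (auto simp: mod_shift_back mod_shift_forth)

lemma coset_prod_inv_mult:
  assumes n: "0 < n" and q: "0 < q" and d: "d < n" and d': "d' < n"
    and v: "v \<in> wr_vecs n q" and eu: "(e, u) \<in> wr_pairs n q"
  shows "coset_prod n q d' w (inv\<^bsub>wreath n q\<^esub> (wr_enc n (d, v)) \<otimes>\<^bsub>wreath n q\<^esub> wr_enc n (e, u)) =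
    (if e = (d + d') mod n then (\<Prod>i<n. w i ((u i + q - v ((i + d') mod n)) mod q)) else 0)"
proof -
  interpret W: group "wreath n q" by (rule group_wreath[OF n q])
  have y: "wr_enc n (d, v) \<in> carrier (wreath n q)" and x: "wr_enc n (e, u) \<in> carrier (wreath n q)"
    using v d eu by (auto simp: wreath_carrier wr_pairs_def)
  define t where "t = inv\<^bsub>wreath n q\<^esub> (wr_enc n (d, v)) \<otimes>\<^bsub>wreath n q\<^esub> wr_enc n (e, u)"
  have "t \<in> carrier (wreath n q)" using y x by (simp add: t_def)
  then obtain d1 v1 where t1: "(d1, v1) \<in> wr_pairs n q" "t = wr_enc n (d1, v1)" by (auto simp: wreath_carrier)
  have "wr_enc n (d, v) \<otimes>\<^bsub>wreath n q\<^esub> t = wr_enc n (e, u)"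
    using y x by (simp add: t_def W.m_assoc[symmetric])
  then have "wr_enc n (wr_mult n q (d, v) (d1, v1)) = wr_enc n (e, u)"
    using t1 wreath_mult[of "(d, v)" n q "(d1, v1)"] v d by (simp add: wr_pairs_def)
  then have pe: "wr_mult n q (d, v) (d1, v1) = (e, u)"
    using wr_mult_closed[OF n q, of "(d,v)" "(d1,v1)"] t1 eu v d
    by (metis wr_dec_enc wr_pairs_def SigmaI lessThan_iff)
  have e1: "e = (d + d1) mod n" using pe by (simp add: wr_mult_def)
  have d1: "d1 < n" and v1: "\<And>i. i < n \<Longrightarrow> v1 i < q" using t1 by (auto simp: wr_pairs_def wr_vecs_def)
  have vq: "\<And>i. i < n \<Longrightarrow> v i < q" using v by (auto simp: wr_vecs_def)
  show ?thesis
  proof (cases "d1 = d'")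
    case True
    have "v1 i = (u i + q - v ((i + d') mod n)) mod q" if "i < n" for i
    proof -
      have "snd (wr_mult n q (d, v) (d1, v1)) i = u i" using pe by simp
      then have "u i = (v ((i + d') mod n) + v1 i) mod q" using that True by (simp add: wr_mult_def)
      then show ?thesis
        using mod_sub_cancel[of "v ((i + d') mod n)" "v1 i" q "u i"] that vq[of "(i + d') mod n"] v1[OF that] n
        by simp
    qed
    then show ?thesis using e1 True t1 unfolding t_def[symmetric]
      by (simp add: coset_prod_def wr_dec_enc wreath_carrier)
  next
    case False
    then have "e \<noteq> (d + d') mod n" using e1 mod_add_left_cancel[of d d1 n d'] d1 d' d by auto
    then show ?thesis using False t1 unfolding t_def[symmetric] by (simp add: coset_prod_def wr_dec_enc)
  qed
qed

lemma conv_coset_prod_left: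
  assumes n: "0 < n" and q: "0 < q" and d: "d < n" and x: "x \<in> carrier (wreath n q)"
  shows "conv (wreath n q) (coset_prod n q d w) h x =
    (\<Sum>v\<in>wr_vecs n q. (\<Prod>i<n. w i (v i)) * h (inv\<^bsub>wreath n q\<^esub> (wr_enc n (d, v)) \<otimes>\<^bsub>wreath n q\<^esub> x))"
proof -
  let ?S = "wr_enc n ` ({d} \<times> wr_vecs n q)"
  have fS: "finite ?S" by (simp add: wr_vecs_def finite_PiE)
  have sS: "{y. coset_prod n q d w y \<noteq> 0} \<subseteq> ?S"
  proof
    fix y assume "y \<in> {y. coset_prod n q d w y \<noteq> 0}"
    then have "y \<in> carrier (wreath n q)" "fst (wr_dec n y) = d" by (auto simp: coset_prod_def split: if_splits)
    then obtain p where "p \<in> wr_pairs n q" "y = wr_enc n p" "fst p = d" by (auto simp: wreath_carrier wr_dec_enc)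
    then show "y \<in> ?S" by (cases p) (auto simp: wr_pairs_def)
  qed
  have "inj_on (wr_enc n) ({d} \<times> wr_vecs n q)"
    by (rule inj_on_subset[OF inj_on_wr_enc[of n q]]) (use d in \<open>auto simp: wr_pairs_def\<close>)
  then have inj: "inj_on (\<lambda>v. wr_enc n (d, v)) (wr_vecs n q)" by (auto simp: inj_on_def)
  have S: "?S = (\<lambda>v. wr_enc n (d, v)) ` wr_vecs n q" by auto
  have "coset_prod n q d w (wr_enc n (d, v)) = (\<Prod>i<n. w i (v i))" if "v \<in> wr_vecs n q" for v
    using that d by (simp add: coset_prod_def wr_dec_enc wreath_carrier wr_pairs_def)
  then show ?thesis
    unfolding conv_superset[OF fS sS] S using x by (simp add: sum.reindex[OF inj])
qed

lemma sum_wr_vecs_rotate: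
  assumes d: "d < n"
  shows "(\<Sum>v\<in>wr_vecs n q. \<Prod>i<n. F i (v ((i + d) mod n))) = (\<Sum>v\<in>wr_vecs n q. \<Prod>i<n. F i (v i))"
proof (rule sum.reindex_bij_witness[where i="\<lambda>a. (\<lambda>i. if i < n then a ((i + n - d) mod n) else undefined)"
                                    and j="\<lambda>v. (\<lambda>i. if i < n then v ((i + d) mod n) else undefined)"])
  fix v assume v: "v \<in> wr_vecs n q"
  show "(\<lambda>i. if i < n then (if (i + n - d) mod n < n then v (((i + n - d) mod n + d) mod n) else undefined) else undefined) = v"
    using v d by (auto simp: fun_eq_iff mod_shift_forth wr_vecs_def PiE_def extensional_def)
  show "(\<lambda>i. if i < n then v ((i + d) mod n) else undefined) \<in> wr_vecs n q"
    using v d by (auto simp: wr_vecs_def PiE_iff extensional_def)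
  show "(\<Prod>i<n. F i (if i < n then v ((i + d) mod n) else undefined)) = (\<Prod>i<n. F i (v ((i + d) mod n)))"
    by simp
next
  fix a assume a: "a \<in> wr_vecs n q"
  show "(\<lambda>i. if i < n then (if (i + d) mod n < n then a (((i + d) mod n + n - d) mod n) else undefined) else undefined) = a"
    using a d by (auto simp: fun_eq_iff mod_shift_back wr_vecs_def PiE_def extensional_def)
  show "(\<lambda>i. if i < n then a ((i + n - d) mod n) else undefined) \<in> wr_vecs n q"
    using a d by (auto simp: wr_vecs_def PiE_iff extensional_def)
qed

lemma conv_coset_prod:
  assumes n: "0 < n" and q: "0 < q" and d: "d < n" and d': "d' < n"
  shows "conv (wreath n q) (coset_prod n q d w) (coset_prod n q d' w') =
         coset_prod n q ((d + d') mod n) (\<lambda>i b. cyclic_conv q (w ((i + d') mod n)) (w' i) b)"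
proof
  fix x
  let ?s = "\<lambda>i. (i + d') mod n"
  show "conv (wreath n q) (coset_prod n q d w) (coset_prod n q d' w') x =
      coset_prod n q ((d + d') mod n) (\<lambda>i b. cyclic_conv q (w (?s i)) (w' i) b) x"
  proof (cases "x \<in> carrier (wreath n q)")
    case False
    then show ?thesis by (simp add: conv_def coset_prod_def)
  next
    case True
    then obtain e u where eu: "(e, u) \<in> wr_pairs n q" "x = wr_enc n (e, u)" by (auto simp: wreath_carrier)
    let ?F = "\<lambda>i b. w (?s i) b * w' i ((u i + q - b) mod q)"
    have "conv (wreath n q) (coset_prod n q d w) (coset_prod n q d' w') x =
        (\<Sum>v\<in>wr_vecs n q. (\<Prod>i<n. w i (v i)) *
          coset_prod n q d' w' (inv\<^bsub>wreath n q\<^esub> (wr_enc n (d, v)) \<otimes>\<^bsub>wreath n q\<^esub> wr_enc n (e, u)))"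
      using conv_coset_prod_left[OF n q d True] unfolding eu(2) .
    also have "\<dots> = (\<Sum>v\<in>wr_vecs n q. (\<Prod>i<n. w i (v i)) *
        (if e = (d + d') mod n then \<Prod>i<n. w' i ((u i + q - v (?s i)) mod q) else 0))"
      by (rule sum.cong) (simp_all add: coset_prod_inv_mult[OF n q d d' _ eu(1)])
    also have "\<dots> = (if e = (d + d') mod n
        then \<Sum>v\<in>wr_vecs n q. (\<Prod>i<n. w i (v i)) * (\<Prod>i<n. w' i ((u i + q - v (?s i)) mod q)) else 0)"
      by (cases "e = (d + d') mod n") simp_all
    also have "(\<Sum>v\<in>wr_vecs n q. (\<Prod>i<n. w i (v i)) * (\<Prod>i<n. w' i ((u i + q - v (?s i)) mod q))) =
        (\<Sum>v\<in>wr_vecs n q. \<Prod>i<n. ?F i (v (?s i)))"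
    proof (rule sum.cong)
      fix v
      have "(\<Prod>i<n. w i (v i)) = (\<Prod>i<n. w (?s i) (v (?s i)))"
        using prod.reindex_bij_betw[OF bij_betw_mod_shift[OF d'], of "\<lambda>i. w i (v i)"] by simp
      then show "(\<Prod>i<n. w i (v i)) * (\<Prod>i<n. w' i ((u i + q - v (?s i)) mod q)) = (\<Prod>i<n. ?F i (v (?s i)))"
        by (simp add: prod.distrib)
    qed simp
    also have "\<dots> = (\<Sum>v\<in>wr_vecs n q. \<Prod>i<n. ?F i (v i))"
      by (rule sum_wr_vecs_rotate[OF d'])
    also have "\<dots> = (\<Prod>i<n. \<Sum>b<q. ?F i b)"
      by (simp add: wr_vecs_def prod_sum_PiE)
    also have "(if e = (d + d') mod n then \<Prod>i<n. \<Sum>b<q. ?F i b else 0) =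
        coset_prod n q ((d + d') mod n) (\<lambda>i b. cyclic_conv q (w (?s i)) (w' i) b) x"
      using True wr_dec_enc[OF eu(1)] by (simp add: coset_prod_def eu(2)[symmetric] cyclic_conv_def)
    finally show ?thesis .
  qed
qed

text \<open>As a function on \<open>\<int>\<^sub>q\<close>, \<open>pattern q j i\<close> is \<open>\<sigma>\<^sub>i\<close> for \<open>i = j\<close> and \<open>q - \<sigma>\<^sub>i\<close> otherwise,
  so \<open>munit n q i j\<close> is \<open>E\<^sub>i\<^sub>j\<close>.\<close>

definition pattern :: "nat \<Rightarrow> nat \<Rightarrow> nat \<Rightarrow> nat \<Rightarrow> int" where
  "pattern q j i b = (if i = j then 0 else int q) * (if b = 0 then 1 else 0) + (if i = j then 1 else -1)"

definition munit :: "nat \<Rightarrow> nat \<Rightarrow> nat \<Rightarrow> nat \<Rightarrow> nat \<Rightarrow> int" where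
  "munit n q i j = coset_prod n q ((i + n - j) mod n) (pattern q j)"

lemma mod_sub_eq_0_iff:
  assumes b: "b < q" and c: "c < (q::nat)"
  shows "((b + q - c) mod q = 0 \<longleftrightarrow> c = b)"
proof (cases "c \<le> b")
  case True
  then have e: "b + q - c = (b - c) + q" by simp
  have "b - c < q" using b by linarith
  then have "(b + q - c) mod q = b - c" unfolding e mod_add_self2 by (rule mod_less)
  then show ?thesis using True by linarith
next
  case False
  then have "b + q - c < q" using c by linarith
  then have "(b + q - c) mod q = b + q - c" by (rule mod_less)
  then show ?thesis using False c by linarith
qed

lemma cyclic_conv_affine:
  assumes b: "b < q"
  shows "cyclic_conv q (\<lambda>c. \<alpha> * (if c = 0 then 1 else 0) + \<beta>) (\<lambda>c. \<gamma> * (if c = 0 then 1 else 0) + \<epsilon>) b =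
         \<alpha> * \<gamma> * (if b = 0 then 1 else 0) + \<alpha> * \<epsilon> + \<beta> * \<gamma> + \<beta> * \<epsilon> * int q"
proof -
  have q: "0 < q" using b by simp
  have "cyclic_conv q (\<lambda>c. \<alpha> * (if c = 0 then 1 else 0) + \<beta>) (\<lambda>c. \<gamma> * (if c = 0 then 1 else 0) + \<epsilon>) b =
        (\<Sum>c<q. (\<alpha> * (if c = 0 then 1 else 0) + \<beta>) * (\<gamma> * (if c = b then 1 else 0) + \<epsilon>))"
    unfolding cyclic_conv_def by (rule sum.cong) (simp_all add: mod_sub_eq_0_iff[OF b])
  also have "\<dots> = (\<Sum>c<q. (if c = 0 then \<alpha> * \<gamma> * (if b = 0 then 1 else 0) else 0))
                 + (\<Sum>c<q. (if c = 0 then \<alpha> * \<epsilon> else 0))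
                 + (\<Sum>c<q. (if c = b then \<beta> * \<gamma> else 0)) + (\<Sum>c<q. \<beta> * \<epsilon>)"
  proof -
    have "(\<alpha> * (if c = 0 then 1 else 0) + \<beta>) * (\<gamma> * (if c = b then 1 else 0) + \<epsilon>) =
      (if c = 0 then \<alpha> * \<gamma> * (if b = 0 then 1 else 0) else 0) + (if c = 0 then \<alpha> * \<epsilon> else 0)
      + (if c = b then \<beta> * \<gamma> else 0) + \<beta> * \<epsilon>" for c
      by (cases "c = 0"; cases "c = b") (simp_all add: algebra_simps)
    then show ?thesis by (simp only: sum.distrib)
  qed
  also have "\<dots> = \<alpha> * \<gamma> * (if b = 0 then 1 else 0) + \<alpha> * \<epsilon> + \<beta> * \<gamma> + \<beta> * \<epsilon> * int q"
    using b q by (simp add: sum.delta)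
  finally show ?thesis .
qed

lemma pattern_affine: "pattern q j a = (\<lambda>c. (if a = j then 0 else int q) * (if c = 0 then 1 else 0) + (if a = j then 1 else -1))"
  by (simp add: pattern_def fun_eq_iff)

lemma cyclic_conv_pattern:
  assumes "b < q"
  shows "cyclic_conv q (pattern q j a) (pattern q l a') b =
         (if a = j \<and> a' = l then int q else if a \<noteq> j \<and> a' \<noteq> l then int q * pattern q l a' b else 0)"
  unfolding pattern_affine[of q j a] pattern_affine[of q l a'] cyclic_conv_affine[OF assms]
  by (auto simp: pattern_def algebra_simps)

lemma wr_vecs_less: "v \<in> wr_vecs n q \<Longrightarrow> i < n \<Longrightarrow> v i < q"
  unfolding wr_vecs_def using PiE_mem by fastforce

lemma wr_dec_in_pairs: "x \<in> carrier (wreath n q) \<Longrightarrow> wr_dec n x \<in> wr_pairs n q"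
  by (auto simp: wreath_carrier wr_dec_enc)

lemma wr_dec_snd_less: "x \<in> carrier (wreath n q) \<Longrightarrow> i < n \<Longrightarrow> snd (wr_dec n x) i < q"
  using wr_dec_in_pairs[of x n q] wr_vecs_less[of "snd (wr_dec n x)" n q i] by (auto simp: wr_pairs_def mem_Times_iff)

lemma coset_prod_cong:
  assumes "\<And>i b. i < n \<Longrightarrow> b < q \<Longrightarrow> w i b = w' i b"
  shows "coset_prod n q d w = coset_prod n q d w'"
proof
  fix x
  show "coset_prod n q d w x = coset_prod n q d w' x"
  proof (cases "x \<in> carrier (wreath n q) \<and> fst (wr_dec n x) = d")
    case True
    then have "\<And>i. i < n \<Longrightarrow> snd (wr_dec n x) i < q" using wr_dec_snd_less by blast
    then show ?thesis using True assms by (simp add: coset_prod_def)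
  next
    case False
    then show ?thesis unfolding coset_prod_def by presburger
  qed
qed

lemma coset_prod_scale: "coset_prod n q d (\<lambda>i b. c * w i b) x = c ^ n * coset_prod n q d w x"
  by (simp add: coset_prod_def prod.distrib)

lemma coset_prod_eq_0:
  assumes "l < n" "\<And>b. b < q \<Longrightarrow> w l b = 0"
  shows "coset_prod n q d w x = 0"
proof (cases "x \<in> carrier (wreath n q) \<and> fst (wr_dec n x) = d")
  case True
  then have "snd (wr_dec n x) l < q" using assms(1) wr_dec_snd_less by blast
  then have "w l (snd (wr_dec n x) l) = 0" using assms by simp
  then show ?thesis using assms(1) True unfolding coset_prod_def by (simp add: prod_zero_iff) (meson lessThan_iff)
next
  case False
  then show ?thesis unfolding coset_prod_def by presburger
qed

lemma mod_diff_add: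
  assumes "i < n" "j < n" "l < (n::nat)"
  shows "((i + n - j) mod n + (j + n - l) mod n) mod n = (i + n - l) mod n"
proof -
  have "((i + n - j) mod n + (j + n - l) mod n) mod n = ((i + n - j) + (j + n - l)) mod n"
    by (simp add: mod_add_left_eq mod_add_right_eq)
  also have "(i + n - j) + (j + n - l) = (i + n - l) + n" using assms by simp
  finally show ?thesis by simp
qed

lemma mod_add_diff:
  assumes "k < n" "l < (n::nat)"
  shows "(l + (k + n - l) mod n) mod n = k"
proof -
  have "(l + (k + n - l) mod n) mod n = (l + (k + n - l)) mod n" by (simp add: mod_add_right_eq)
  also have "l + (k + n - l) = k + n" using assms by simp
  finally show ?thesis using assms by simp
qed

lemma conv_munit:
  assumes n: "0 < n" and q: "0 < q" and ijkl: "i < n" "j < n" "k < n" "l < n"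
  shows "conv (wreath n q) (munit n q i j) (munit n q k l) = (\<lambda>x. if j = k then int q ^ n * munit n q i l x else 0)"
proof -
  let ?d = "(i + n - j) mod n" and ?d' = "(k + n - l) mod n"
  have dd: "?d < n" "?d' < n" using n by auto
  have P: "conv (wreath n q) (munit n q i j) (munit n q k l) =
        coset_prod n q ((?d + ?d') mod n) (\<lambda>a b. cyclic_conv q (pattern q j ((a + ?d') mod n)) (pattern q l a) b)"
    unfolding munit_def by (rule conv_coset_prod[OF n q dd])
  show ?thesis
  proof (cases "j = k")
    case True
    have 1: "(?d + ?d') mod n = (i + n - l) mod n" using True mod_diff_add[OF ijkl(1,2,4)] by simp
    have 2: "cyclic_conv q (pattern q j ((a + ?d') mod n)) (pattern q l a) b = int q * pattern q l a b" if "a < n" "b < q" for a b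
    proof -
      have "(a + ?d') mod n = j \<longleftrightarrow> a = l"
      proof
        assume "(a + ?d') mod n = j"
        then have "(?d' + a) mod n = (?d' + l) mod n" using mod_add_diff[OF ijkl(3,4)] True by (simp add: add.commute)
        then show "a = l" using mod_add_left_cancel[of ?d' a n l] that ijkl dd by auto
      next
        assume "a = l" then show "(a + ?d') mod n = j" using mod_add_diff[OF ijkl(3,4)] True by simp
      qed
      then show ?thesis using cyclic_conv_pattern[OF that(2), of j "(a + ?d') mod n" l a] by (auto simp: pattern_def)
    qed
    have "conv (wreath n q) (munit n q i j) (munit n q k l) = coset_prod n q ((i + n - l) mod n) (\<lambda>a b. int q * pattern q l a b)"
      unfolding P 1 by (rule coset_prod_cong) (use 2 in simp)
    then show ?thesis using True by (simp add: fun_eq_iff coset_prod_scale munit_def)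
  next
    case False
    have "coset_prod n q ((?d + ?d') mod n) (\<lambda>a b. cyclic_conv q (pattern q j ((a + ?d') mod n)) (pattern q l a) b) x = 0" for x
    proof (rule coset_prod_eq_0[OF ijkl(4)])
      fix b assume b: "b < q"
      have "(l + ?d') mod n = k" using mod_add_diff[OF ijkl(3,4)] .
      then show "cyclic_conv q (pattern q j ((l + ?d') mod n)) (pattern q l l) b = 0"
        using cyclic_conv_pattern[OF b, of j "(l + ?d') mod n" l l] False by simp
    qed
    then show ?thesis using False P by (simp add: fun_eq_iff)
  qed
qed

definition munit_compl :: "nat \<Rightarrow> nat \<Rightarrow> nat \<Rightarrow> int" where
  "munit_compl n q = (\<lambda>x. int q ^ n * gr_unit (wreath n q) x - (\<Sum>k<n. munit n q k k x))"

lemma gr_elem_wreath: "(\<And>x. x \<notin> carrier (wreath n q) \<Longrightarrow> f x = 0) \<Longrightarrow> gr_elem (wreath n q) f"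
  unfolding gr_elem_def using finite_wreath[of n q]
  by (metis (mono_tags, lifting) finite_subset mem_Collect_eq subsetI)

lemma munit_outside: "x \<notin> carrier (wreath n q) \<Longrightarrow> munit n q i j x = 0"
  by (simp add: munit_def coset_prod_def)

lemma gr_elem_munit: "gr_elem (wreath n q) (munit n q i j)"
  by (rule gr_elem_wreath) (rule munit_outside)

lemma finite_munit_support: "finite {x. munit n q i j x \<noteq> 0}"
  using gr_elem_munit by (simp add: gr_elem_def)

lemma gr_elem_wreath_unit:
  "0 < n \<Longrightarrow> 0 < q \<Longrightarrow> gr_elem (wreath n q) (gr_unit (wreath n q) :: nat \<Rightarrow> int)"
  by (simp add: group.gr_elem_unit group_wreath)

lemma gr_elem_munit_compl: "0 < n \<Longrightarrow> 0 < q \<Longrightarrow> gr_elem (wreath n q) (munit_compl n q)"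
  by (rule gr_elem_wreath) (use gr_elem_wreath_unit in \<open>auto simp: munit_compl_def munit_outside gr_elem_def\<close>)

lemma conv_munit_compl:
  assumes n: "0 < n" and q: "0 < q" and ij: "i < n" "j < n"
  shows "conv (wreath n q) (munit n q i j) (munit_compl n q) = (\<lambda>x. 0)"
proof -
  interpret W: group "wreath n q" by (rule group_wreath[OF n q])
  have "conv (wreath n q) (munit n q i j) (munit_compl n q) =
        (\<lambda>x. conv (wreath n q) (munit n q i j) (\<lambda>x. int q ^ n * gr_unit (wreath n q) x) x -
             conv (wreath n q) (munit n q i j) (\<lambda>x. \<Sum>k<n. munit n q k k x) x)"
    unfolding munit_compl_def by (rule conv_diff_right)
  also have "\<dots> = (\<lambda>x. int q ^ n * munit n q i j x - (\<Sum>k<n. if j = k then int q ^ n * munit n q i k x else 0))"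
    unfolding conv_smult_right[of "int q ^ n", OF mult.commute] conv_sum_right
      conv_munit[OF n q ij] W.conv_unit_right[OF gr_elem_munit]
    using ij by (simp add: conv_munit[OF n q])
  also have "\<dots> = (\<lambda>x. 0)" using ij by (simp add: sum.delta)
  finally show ?thesis .
qed

lemma conv_munit_compl_munit:
  assumes n: "0 < n" and q: "0 < q" and kl: "k < n" "l < n"
  shows "conv (wreath n q) (munit_compl n q) (munit n q k l) = (\<lambda>x. 0)"
proof -
  interpret W: group "wreath n q" by (rule group_wreath[OF n q])
  have f1: "finite {x. int q ^ n * gr_unit (wreath n q) x \<noteq> 0}" using gr_elem_wreath_unit[OF n q]
    by (auto simp: gr_elem_def elim: finite_subset[rotated])
  have f2: "finite {x. (\<Sum>k<n. munit n q k k x) \<noteq> 0}" by (rule fin_supp_sum) (auto simp: finite_munit_support)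
  have "conv (wreath n q) (munit_compl n q) (munit n q k l) =
        (\<lambda>x. conv (wreath n q) (\<lambda>x. int q ^ n * gr_unit (wreath n q) x) (munit n q k l) x -
             conv (wreath n q) (\<lambda>x. \<Sum>k<n. munit n q k k x) (munit n q k l) x)"
    unfolding munit_compl_def by (rule conv_diff_left[OF f1 f2])
  also have "\<dots> = (\<lambda>x. int q ^ n * munit n q k l x - (\<Sum>k'<n. if k' = k then int q ^ n * munit n q k' l x else 0))"
  proof -
    have a: "conv (wreath n q) (\<lambda>x. int q ^ n * gr_unit (wreath n q) x) (munit n q k l) = (\<lambda>x. int q ^ n * munit n q k l x)"
      by (simp add: conv_smult_left[OF gr_elem_finite[OF gr_elem_wreath_unit[OF n q]]]
          W.conv_unit_left[OF gr_elem_munit])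
    have b: "conv (wreath n q) (\<lambda>x. \<Sum>k<n. munit n q k k x) (munit n q k l) = (\<lambda>x. \<Sum>k'<n. if k' = k then int q ^ n * munit n q k' l x else 0)"
      by (simp add: conv_sum_left finite_munit_support conv_munit[OF n q] kl)
    show ?thesis by (simp add: a b)
  qed
  also have "\<dots> = (\<lambda>x. 0)" using kl by (simp add: sum.delta)
  finally show ?thesis .
qed

lemma conv_munit_compl_self:
  assumes n: "0 < n" and q: "0 < q"
  shows "conv (wreath n q) (munit_compl n q) (munit_compl n q) = (\<lambda>x. int q ^ n * munit_compl n q x)"
proof -
  interpret W: group "wreath n q" by (rule group_wreath[OF n q])
  have f1: "finite {x. int q ^ n * gr_unit (wreath n q) x \<noteq> 0}" using gr_elem_wreath_unit[OF n q]
    by (auto simp: gr_elem_def elim: finite_subset[rotated])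
  have f2: "finite {x. (\<Sum>k<n. munit n q k k x) \<noteq> 0}" by (rule fin_supp_sum) (auto simp: finite_munit_support)
  have "conv (wreath n q) (munit_compl n q) (munit_compl n q) =
        (\<lambda>x. conv (wreath n q) (\<lambda>x. int q ^ n * gr_unit (wreath n q) x) (munit_compl n q) x -
             conv (wreath n q) (\<lambda>x. \<Sum>k<n. munit n q k k x) (munit_compl n q) x)"
    unfolding munit_compl_def[of n q, symmetric] by (subst (1) munit_compl_def) (rule conv_diff_left[OF f1 f2])
  also have "\<dots> = (\<lambda>x. int q ^ n * munit_compl n q x)"
  proof -
    have a: "conv (wreath n q) (\<lambda>x. int q ^ n * gr_unit (wreath n q) x) (munit_compl n q) = (\<lambda>x. int q ^ n * munit_compl n q x)"
      by (simp add: conv_smult_left[OF gr_elem_finite[OF gr_elem_wreath_unit[OF n q]]]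
          W.conv_unit_left[OF gr_elem_munit_compl[OF n q]])
    have b: "conv (wreath n q) (\<lambda>x. \<Sum>k<n. munit n q k k x) (munit_compl n q) = (\<lambda>x. 0)"
      by (simp add: conv_sum_left finite_munit_support conv_munit_compl[OF n q])
    show ?thesis by (simp add: a b)
  qed
  finally show ?thesis .
qed

definition tensor :: "('g \<Rightarrow> 'k::ring_1) \<Rightarrow> ('h \<Rightarrow> int) \<Rightarrow> 'g \<times> 'h \<Rightarrow> 'k" where
  "tensor x u = (\<lambda>p. x (fst p) * of_int (u (snd p)))"

lemma tensor_support: "{p. tensor x u p \<noteq> 0} \<subseteq> {g. x g \<noteq> 0} \<times> {h. u h \<noteq> 0}"
  by (auto simp: tensor_def)

lemma finite_tensor_support: "finite {g. x g \<noteq> 0} \<Longrightarrow> finite {h. u h \<noteq> 0} \<Longrightarrow> finite {p. tensor x u p \<noteq> 0}"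
  by (rule finite_subset[OF tensor_support]) simp

lemma gr_elem_tensor: "gr_elem G x \<Longrightarrow> gr_elem H u \<Longrightarrow> gr_elem (G \<times>\<times> H) (tensor x u)"
  unfolding gr_elem_def using finite_tensor_support[of x u] by (auto simp: tensor_def)

lemma of_int_left_comm: "of_int a * (b * c) = b * (of_int a * (c::'k::ring_1))"
  by (metis mult.assoc mult_of_int_commute)

lemma conv_tensor:
  assumes G: "group G" and H: "group H" and x: "gr_elem G x" and u: "gr_elem H u"
  shows "conv (G \<times>\<times> H) (tensor x u) (tensor y v) = tensor (conv G x y) (conv H u v)"
proof
  fix p :: "'a \<times> 'c"
  obtain g h where p: "p = (g, h)" by (cases p)
  interpret G: group G by fact
  interpret H: group H by fact
  show "conv (G \<times>\<times> H) (tensor x u) (tensor y v) p = tensor (conv G x y) (conv H u v) p"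
  proof (cases "g \<in> carrier G \<and> h \<in> carrier H")
    case False
    then show ?thesis by (auto simp: conv_def tensor_def p)
  next
    case True
    let ?A = "{g. x g \<noteq> 0}" and ?B = "{h. u h \<noteq> 0}"
    have fA: "finite ?A" and fB: "finite ?B" using x u by (auto simp: gr_elem_def)
    have Ac: "?A \<subseteq> carrier G" and Bc: "?B \<subseteq> carrier H" using x u by (auto simp: gr_elem_def)
    have "conv (G \<times>\<times> H) (tensor x u) (tensor y v) p =
       (\<Sum>z\<in>?A \<times> ?B. tensor x u z * tensor y v (inv\<^bsub>G \<times>\<times> H\<^esub> z \<otimes>\<^bsub>G \<times>\<times> H\<^esub> p))"
    proof -
      have fAB: "finite (?A \<times> ?B)" using fA fB by simp
      show ?thesis using True p by (simp add: conv_superset[OF fAB tensor_support])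
    qed
    also have "\<dots> = (\<Sum>z\<in>?A \<times> ?B. case z of (g', h') \<Rightarrow>
          (x g' * y (inv\<^bsub>G\<^esub> g' \<otimes>\<^bsub>G\<^esub> g)) * of_int (u h' * v (inv\<^bsub>H\<^esub> h' \<otimes>\<^bsub>H\<^esub> h)))"
    proof (rule sum.cong)
      fix z assume z: "z \<in> ?A \<times> ?B"
      obtain g' h' where z': "z = (g', h')" by (cases z)
      have "g' \<in> carrier G" "h' \<in> carrier H" using z z' Ac Bc by auto
      then have "inv\<^bsub>G \<times>\<times> H\<^esub> z = (inv\<^bsub>G\<^esub> g', inv\<^bsub>H\<^esub> h')" using z' G H by simp
      then show "tensor x u z * tensor y v (inv\<^bsub>G \<times>\<times> H\<^esub> z \<otimes>\<^bsub>G \<times>\<times> H\<^esub> p) = (case z of (g', h') \<Rightarrow>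
          (x g' * y (inv\<^bsub>G\<^esub> g' \<otimes>\<^bsub>G\<^esub> g)) * of_int (u h' * v (inv\<^bsub>H\<^esub> h' \<otimes>\<^bsub>H\<^esub> h)))"
        using z' p by (simp add: tensor_def mult.assoc of_int_left_comm)
    qed simp
    also have "\<dots> = (\<Sum>g'\<in>?A. \<Sum>h'\<in>?B. (x g' * y (inv\<^bsub>G\<^esub> g' \<otimes>\<^bsub>G\<^esub> g)) * of_int (u h' * v (inv\<^bsub>H\<^esub> h' \<otimes>\<^bsub>H\<^esub> h)))"
      by (simp add: sum.cartesian_product)
    also have "\<dots> = (\<Sum>g'\<in>?A. x g' * y (inv\<^bsub>G\<^esub> g' \<otimes>\<^bsub>G\<^esub> g) * of_int (\<Sum>h'\<in>?B. u h' * v (inv\<^bsub>H\<^esub> h' \<otimes>\<^bsub>H\<^esub> h)))"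
      by (simp only: sum_distrib_left of_int_sum)
    also have "\<dots> = (\<Sum>g'\<in>?A. x g' * y (inv\<^bsub>G\<^esub> g' \<otimes>\<^bsub>G\<^esub> g)) * of_int (\<Sum>h'\<in>?B. u h' * v (inv\<^bsub>H\<^esub> h' \<otimes>\<^bsub>H\<^esub> h))"
      by (simp only: sum_distrib_right)
    also have "\<dots> = tensor (conv G x y) (conv H u v) p"
      using True by (simp add: tensor_def conv_def p)
    finally show ?thesis .
  qed
qed

lemma tensor_zero_right: "tensor x (\<lambda>h. 0) = (\<lambda>p. 0)"
  by (simp add: tensor_def)

lemma tensor_zero_left: "tensor (\<lambda>g. 0) u = (\<lambda>p. 0)"
  by (simp add: tensor_def)

lemma tensor_scale_right: "tensor x (\<lambda>h. c * u h) = tensor (\<lambda>g. of_int c * x g) u"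
  unfolding tensor_def by (rule ext) (metis mult.assoc mult_of_int_commute of_int_mult)

definition munit_matrix :: "nat \<Rightarrow> nat \<Rightarrow> (nat \<Rightarrow> nat \<Rightarrow> 'g \<Rightarrow> 'k::ring_1) \<Rightarrow> 'g \<times> nat \<Rightarrow> 'k" where
  "munit_matrix n q Z = (\<lambda>p. \<Sum>i<n. \<Sum>j<n. tensor (Z i j) (munit n q i j) p)"

definition munit_sum :: "nat \<Rightarrow> nat \<Rightarrow> (nat \<Rightarrow> nat \<Rightarrow> 'g \<Rightarrow> 'k::ring_1) \<Rightarrow> ('g \<Rightarrow> 'k) \<Rightarrow> 'g \<times> nat \<Rightarrow> 'k" where
  "munit_sum n q Z y = (\<lambda>p. munit_matrix n q Z p + tensor y (munit_compl n q) p)"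

lemma gr_elem_munit_matrix:
  "(\<And>i j. i < n \<Longrightarrow> j < n \<Longrightarrow> gr_elem G (Z i j)) \<Longrightarrow> gr_elem (G \<times>\<times> wreath n q) (munit_matrix n q Z)"
  unfolding munit_matrix_def by (intro gr_elem_sum gr_elem_tensor finite_lessThan gr_elem_munit) auto

lemma gr_elem_munit_sum:
  assumes "0 < n" "0 < q" "\<And>i j. i < n \<Longrightarrow> j < n \<Longrightarrow> gr_elem G (Z i j)" "gr_elem G y"
  shows "gr_elem (G \<times>\<times> wreath n q) (munit_sum n q Z y)"
  unfolding munit_sum_def
  by (intro gr_elem_add gr_elem_munit_matrix gr_elem_tensor gr_elem_munit_compl assms)

lemma conv_munit_matrix_left:
  assumes Z: "\<And>i j. i < n \<Longrightarrow> j < n \<Longrightarrow> gr_elem G (Z i j)"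
  shows "conv (G \<times>\<times> wreath n q) (munit_matrix n q Z) h =
    (\<lambda>p. \<Sum>i<n. \<Sum>j<n. conv (G \<times>\<times> wreath n q) (tensor (Z i j) (munit n q i j)) h p)"
proof -
  let ?W = "G \<times>\<times> wreath n q"
  have fin: "finite {p. tensor (Z i j) (munit n q i j) p \<noteq> 0}" if "i < n" "j < n" for i j
    using gr_elem_finite[OF gr_elem_tensor[OF Z[OF that] gr_elem_munit]] .
  have row: "conv ?W (\<lambda>p. \<Sum>j<n. tensor (Z i j) (munit n q i j) p) h =
      (\<lambda>p. \<Sum>j<n. conv ?W (tensor (Z i j) (munit n q i j)) h p)" if "i < n" for i
    by (rule conv_sum_left) (auto intro: fin that)
  have "conv ?W (munit_matrix n q Z) h = (\<lambda>p. \<Sum>i<n. conv ?W (\<lambda>p. \<Sum>j<n. tensor (Z i j) (munit n q i j) p) h p)"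
    unfolding munit_matrix_def by (rule conv_sum_left) (auto intro!: fin_supp_sum fin)
  also have "\<dots> = (\<lambda>p. \<Sum>i<n. \<Sum>j<n. conv ?W (tensor (Z i j) (munit n q i j)) h p)"
    by (intro ext sum.cong refl) (simp add: row)
  finally show ?thesis .
qed

lemma conv_munit_matrix_right:
  "conv W f (munit_matrix n q Z) = (\<lambda>p. \<Sum>i<n. \<Sum>j<n. conv W f (tensor (Z i j) (munit n q i j)) p)"
  unfolding munit_matrix_def conv_sum_right by simp

lemma sum_sum_delta:
  fixes Xf :: "'i \<Rightarrow> 'i \<Rightarrow> 'j \<Rightarrow> 'c::comm_monoid_add"
  assumes "finite AA"
  shows "(\<Sum>a\<in>AA. \<Sum>b\<in>AA. \<Sum>c\<in>BB. if a = b then Xf a b c else 0) = (\<Sum>a\<in>AA. \<Sum>c\<in>BB. Xf a a c)"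
proof (rule sum.cong[OF refl])
  fix a assume a: "a \<in> AA"
  have "(\<Sum>b\<in>AA. \<Sum>c\<in>BB. if a = b then Xf a b c else 0) = (\<Sum>b\<in>AA. if a = b then (\<Sum>c\<in>BB. Xf a b c) else 0)"
    by (rule sum.cong) auto
  also have "\<dots> = (\<Sum>c\<in>BB. Xf a a c)" using a assms by (simp add: sum.delta)
  finally show "(\<Sum>b\<in>AA. \<Sum>c\<in>BB. if a = b then Xf a b c else 0) = (\<Sum>c\<in>BB. Xf a a c)" .
qed

lemma of_int_mult_move: "(of_int D * a) * of_int e = a * (of_int (D * e) :: 'k::ring_1)"
  by (metis mult.assoc mult_of_int_commute of_int_mult)

lemma conv_munit_matrix:
  assumes G: "group G" and n: "0 < n" and q: "0 < q"
    and Z: "\<And>i j. i < n \<Longrightarrow> j < n \<Longrightarrow> gr_elem G (Z i j)"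
  shows "conv (G \<times>\<times> wreath n q) (munit_matrix n q Z) (munit_matrix n q Z') =
    munit_matrix n q (\<lambda>i l g. of_int (int q ^ n) * (\<Sum>j<n. conv G (Z i j) (Z' j l) g))"
proof
  fix p
  let ?D = "int q ^ n"
  have entry: "conv (G \<times>\<times> wreath n q) (tensor (Z i j) (munit n q i j)) (tensor (Z' k l) (munit n q k l)) p =
      (if j = k then conv G (Z i j) (Z' k l) (fst p) * of_int (?D * munit n q i l (snd p)) else 0)"
    if "i < n" "j < n" "k < n" "l < n" for i j k l
    unfolding conv_tensor[OF G group_wreath[OF n q] Z[OF that(1,2)] gr_elem_munit] conv_munit[OF n q that]
    by (simp add: tensor_def)
  have "conv (G \<times>\<times> wreath n q) (munit_matrix n q Z) (munit_matrix n q Z') p =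
      (\<Sum>i<n. \<Sum>j<n. conv (G \<times>\<times> wreath n q) (tensor (Z i j) (munit n q i j)) (munit_matrix n q Z') p)"
    by (rule fun_cong[OF conv_munit_matrix_left[OF Z]])
  also have "\<dots> = (\<Sum>i<n. \<Sum>j<n. \<Sum>k<n. \<Sum>l<n.
      (if j = k then conv G (Z i j) (Z' k l) (fst p) * of_int (?D * munit n q i l (snd p)) else 0))"
    unfolding conv_munit_matrix_right by (intro sum.cong refl) (simp add: entry)
  also have "\<dots> = (\<Sum>i<n. \<Sum>j<n. \<Sum>l<n. conv G (Z i j) (Z' j l) (fst p) * of_int (?D * munit n q i l (snd p)))"
    by (simp only: sum_sum_delta[OF finite_lessThan])
  also have "\<dots> = (\<Sum>i<n. \<Sum>l<n. \<Sum>j<n. conv G (Z i j) (Z' j l) (fst p) * of_int (?D * munit n q i l (snd p)))"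
    by (rule sum.cong[OF refl sum.swap])
  also have "\<dots> = munit_matrix n q (\<lambda>i l g. of_int ?D * (\<Sum>j<n. conv G (Z i j) (Z' j l) g)) p"
    by (simp only: munit_matrix_def tensor_def of_int_mult_move sum_distrib_right)
  finally show "conv (G \<times>\<times> wreath n q) (munit_matrix n q Z) (munit_matrix n q Z') p =
      munit_matrix n q (\<lambda>i l g. of_int (int q ^ n) * (\<Sum>j<n. conv G (Z i j) (Z' j l) g)) p" .
qed

lemma conv_munit_matrix_compl:
  assumes G: "group G" and n: "0 < n" and q: "0 < q" and Z: "\<And>i j. i < n \<Longrightarrow> j < n \<Longrightarrow> gr_elem G (Z i j)"
  shows "conv (G \<times>\<times> wreath n q) (munit_matrix n q Z) (tensor y (munit_compl n q)) = (\<lambda>p. 0)"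
  by (simp add: conv_munit_matrix_left[OF Z] conv_tensor[OF G group_wreath[OF n q] Z gr_elem_munit]
      conv_munit_compl[OF n q] tensor_zero_right)

lemma conv_munit_compl_matrix:
  assumes G: "group G" and n: "0 < n" and q: "0 < q" and y: "gr_elem G y"
  shows "conv (G \<times>\<times> wreath n q) (tensor y (munit_compl n q)) (munit_matrix n q Z) = (\<lambda>p. 0)"
  unfolding conv_munit_matrix_right
  by (simp add: conv_tensor[OF G group_wreath[OF n q] y gr_elem_munit_compl[OF n q]]
      conv_munit_compl_munit[OF n q] tensor_zero_right)

lemma conv_munit_sum:
  assumes G: "group G" and n: "0 < n" and q: "0 < q"
    and Z: "\<And>i j. i < n \<Longrightarrow> j < n \<Longrightarrow> gr_elem G (Z i j)" and y: "gr_elem G y"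
  shows "conv (G \<times>\<times> wreath n q) (munit_sum n q Z y) (munit_sum n q Z' y') =
     munit_sum n q (\<lambda>i l g. of_int (int q ^ n) * (\<Sum>j<n. conv G (Z i j) (Z' j l) g))
       (\<lambda>g. of_int (int q ^ n) * conv G y y' g)"
proof -
  have fin: "finite {p. munit_matrix n q Z p \<noteq> 0}" "finite {p. tensor y (munit_compl n q) p \<noteq> 0}"
    using gr_elem_finite[OF gr_elem_munit_matrix[OF Z, where q = q]]
      gr_elem_finite[OF gr_elem_tensor[OF y gr_elem_munit_compl[OF n q]]] by auto
  have matrix: "conv (G \<times>\<times> wreath n q) (munit_matrix n q Z) (munit_matrix n q Z') =
      munit_matrix n q (\<lambda>i l g. of_int (int q ^ n) * (\<Sum>j<n. conv G (Z i j) (Z' j l) g))"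
    by (rule conv_munit_matrix[OF G n q Z])
  have matrix_compl: "conv (G \<times>\<times> wreath n q) (munit_matrix n q Z) (tensor y' (munit_compl n q)) = (\<lambda>p. 0)"
    by (rule conv_munit_matrix_compl[OF G n q Z])
  show ?thesis
    unfolding munit_sum_def conv_add_left[OF fin] conv_add_right
      matrix matrix_compl conv_munit_compl_matrix[OF G n q y]
      conv_tensor[OF G group_wreath[OF n q] y gr_elem_munit_compl[OF n q]] conv_munit_compl_self[OF n q]
      tensor_scale_right
    by simp
qed

lemma munit_sum_cong:
  assumes "\<And>i j. i < n \<Longrightarrow> j < n \<Longrightarrow> Z i j = Z' i j" "y = y'"
  shows "munit_sum n q Z y = munit_sum n q Z' y'"
  unfolding munit_sum_def munit_matrix_def using assms by (intro ext arg_cong2[where f="(+)"] sum.cong refl) auto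

lemma munit_sum_diag:
  assumes "0 < n"
  shows "munit_sum n q (\<lambda>i l. if i = l then x else (\<lambda>g. 0)) x = tensor (\<lambda>g. of_int (int q ^ n) * x g) (gr_unit (wreath n q))"
proof
  fix p
  have "munit_sum n q (\<lambda>i l. if i = l then x else (\<lambda>g. 0)) x p =
        (\<Sum>i<n. tensor x (munit n q i i) p) + tensor x (munit_compl n q) p"
    unfolding munit_sum_def munit_matrix_def by (simp add: tensor_zero_left if_distrib[of "\<lambda>z. tensor z _ p"] sum.delta cong: if_cong)
  also have "\<dots> = x (fst p) * of_int ((\<Sum>i<n. munit n q i i (snd p)) + munit_compl n q (snd p))"
    by (simp add: tensor_def sum_distrib_left distrib_left)
  also have "\<dots> = tensor (\<lambda>g. of_int (int q ^ n) * x g) (gr_unit (wreath n q)) p"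
  proof -
    have eq: "(\<Sum>i<n. munit n q i i (snd p)) + munit_compl n q (snd p) = int q ^ n * gr_unit (wreath n q) (snd p)"
      by (simp add: munit_compl_def)
    show ?thesis by (simp only: tensor_def of_int_mult_move eq)
  qed
  finally show "munit_sum n q (\<lambda>i l. if i = l then x else (\<lambda>g. 0)) x p = tensor (\<lambda>g. of_int (int q ^ n) * x g) (gr_unit (wreath n q)) p" .
qed

lemma sum_sum_if_eq:
  assumes "finite A" "finite B"
  shows "(\<Sum>i\<in>A. \<Sum>j\<in>B. if i = a \<and> j = b then K else 0) = (if a \<in> A \<and> b \<in> B then K else 0)"
proof -
  have "(\<Sum>j\<in>B. if i = a \<and> j = b then K else 0) = (if i = a then (if b \<in> B then K else 0) else 0)" for i
    using assms(2) by (cases "i = a") (simp_all add: sum.delta)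
  then show ?thesis using assms(1) by (simp add: sum.delta)
qed

lemma munit_sum_corner:
  assumes "0 < n"
  shows "munit_sum n q (\<lambda>a b g. if a = 0 \<and> b = 0 then z g else 0) (\<lambda>g. 0) = tensor z (munit n q 0 0)"
proof
  fix p
  have "(\<Sum>i<n. \<Sum>j<n. tensor (\<lambda>g. if i = 0 \<and> j = 0 then z g else 0) (munit n q i j) p) =
      (\<Sum>i<n. \<Sum>j<n. if i = 0 \<and> j = 0 then tensor z (munit n q 0 0) p else 0)"
    by (intro sum.cong refl) (simp add: tensor_def)
  then show "munit_sum n q (\<lambda>a b g. if a = 0 \<and> b = 0 then z g else 0) (\<lambda>g. 0) p = tensor z (munit n q 0 0) p"
    using assms by (simp add: munit_sum_def munit_matrix_def tensor_zero_left sum_sum_if_eq)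
qed

definition elem_matrix :: "('g, 'b) monoid_scheme \<Rightarrow> nat \<Rightarrow> nat \<Rightarrow> nat \<Rightarrow> nat \<Rightarrow> 'g \<Rightarrow> 'c::{zero,one}" where
  "elem_matrix G a b = (\<lambda>i j. if i = a \<and> j = b then gr_unit G else (\<lambda>g. 0))"

lemma (in group) gr_elem_elem_matrix: "gr_elem G (elem_matrix G a b i j :: 'a \<Rightarrow> 'c::zero_neq_one)"
  by (simp add: elem_matrix_def gr_elem_unit gr_elem_zero)

lemma (in group) sum_conv_elem_matrix_left:
  fixes N :: "nat \<Rightarrow> nat \<Rightarrow> 'a \<Rightarrow> 'c::ring_1"
  assumes "i < n" "gr_elem G (N i b)"
  shows "(\<Sum>j<n. conv G (elem_matrix G 0 i a j) (N j b) g) = (if a = 0 then N i b g else 0)"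
proof -
  have "conv G (elem_matrix G 0 i a j) (N j b) g = (if a = 0 \<and> j = i then N i b g else 0)" for j
    using conv_unit_left[OF assms(2)] by (auto simp: elem_matrix_def conv_zero_left)
  then show ?thesis using assms(1) by (simp add: sum.delta)
qed

lemma (in group) sum_conv_elem_matrix_right:
  fixes M :: "nat \<Rightarrow> nat \<Rightarrow> 'a \<Rightarrow> 'c::ring_1"
  assumes "l < n" "gr_elem G (M a l)"
  shows "(\<Sum>j<n. conv G (M a j) (elem_matrix G l 0 j b) g) = (if b = 0 then M a l g else 0)"
proof -
  have "conv G (M a j) (elem_matrix G l 0 j b) g = (if j = l \<and> b = 0 then M a l g else 0)" for j
    using conv_unit_right[OF assms(2)] by (auto simp: elem_matrix_def conv_zero_right)
  then show ?thesis using assms(1) by (simp add: sum.delta)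
qed

lemma conv_munit_sum_sandwich:
  fixes N :: "nat \<Rightarrow> nat \<Rightarrow> 'g \<Rightarrow> 'k::ring_1"
  assumes G: "group G" and n: "0 < n" and q: "0 < q" and il: "i < n" "l < n"
    and N: "\<And>a b. a < n \<Longrightarrow> b < n \<Longrightarrow> gr_elem G (N a b)"
  shows "conv (G \<times>\<times> wreath n q)
      (conv (G \<times>\<times> wreath n q) (munit_sum n q (elem_matrix G 0 i) (\<lambda>g. 0)) (munit_sum n q N y))
      (munit_sum n q (elem_matrix G l 0) (\<lambda>g. 0))
    = tensor (\<lambda>g. of_int (int q ^ n) * (of_int (int q ^ n) * N i l g)) (munit n q 0 0)"
proof -
  interpret group G by (rule G)
  let ?D = "of_int (int q ^ n) :: 'k"
  let ?M = "\<lambda>a b g. if a = 0 then ?D * N i b g else 0"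
  have M: "gr_elem G (?M a b)" if "b < n" for a b
    using gr_elem_smult[OF N[OF il(1) that]] gr_elem_zero by (cases "a = 0") simp_all
  have "conv (G \<times>\<times> wreath n q) (munit_sum n q (elem_matrix G 0 i) (\<lambda>g. 0)) (munit_sum n q N y) =
      munit_sum n q ?M (\<lambda>g. 0)"
    by (rule trans[OF conv_munit_sum[OF G n q gr_elem_elem_matrix gr_elem_zero] munit_sum_cong])
      (auto simp: sum_conv_elem_matrix_left[where N = N, OF il(1) N[OF il(1)]] conv_zero_left)
  moreover have "conv (G \<times>\<times> wreath n q) (munit_sum n q ?M (\<lambda>g. 0)) (munit_sum n q (elem_matrix G l 0) (\<lambda>g. 0)) =
      munit_sum n q (\<lambda>a b g. if a = 0 \<and> b = 0 then ?D * (?D * N i l g) else 0) (\<lambda>g. 0)"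
    by (rule trans[OF conv_munit_sum[OF G n q M gr_elem_zero] munit_sum_cong])
      (auto simp: sum_conv_elem_matrix_right[where M = ?M, OF il(2) M[OF il(2)]] conv_zero_left)
  ultimately show ?thesis by (simp add: munit_sum_corner[OF n])
qed

lemma inverse_of_int_commute: "inverse (of_int D) * z = z * inverse (of_int D :: 'k::division_ring)"
proof (cases "of_int D = (0::'k)")
  case True then show ?thesis by simp
next
  case False
  have "inverse (of_int D) * z = inverse (of_int D) * z * (of_int D * inverse (of_int D))"
    using False by simp
  also have "\<dots> = inverse (of_int D) * (of_int D * z) * inverse (of_int D)"
    by (metis mult.assoc mult_of_int_commute)
  also have "\<dots> = z * inverse (of_int D)" using False by (simp add: mult.assoc[symmetric])
  finally show ?thesis .
qed

definition wr_witness :: "nat \<Rightarrow> nat \<Rightarrow> nat" where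
  "wr_witness n = (\<lambda>i. if i < n then (if i = 0 then 0 else 1) else undefined)"

lemma wr_witness_in_pairs: "0 < n \<Longrightarrow> 2 \<le> q \<Longrightarrow> (0, wr_witness n) \<in> wr_pairs n q"
  unfolding wr_pairs_def wr_vecs_def wr_witness_def by (auto simp: PiE_iff extensional_def)

lemma munit_witness_nonzero:
  assumes n: "0 < n" and q: "2 \<le> q"
  shows "of_int (munit n q 0 0 (wr_enc n (0, wr_witness n))) \<noteq> (0::'k::ring_1)"
proof -
  let ?f = "\<lambda>i. pattern q 0 i (wr_witness n i)"
  have e: "munit n q 0 0 (wr_enc n (0, wr_witness n)) = (\<Prod>i<n. ?f i)"
    using wr_witness_in_pairs[OF n q] by (simp add: munit_def coset_prod_def wreath_carrier wr_dec_enc)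
  have "?f i * ?f i = 1" if "i < n" for i using that by (simp add: pattern_def wr_witness_def)
  then have "(\<Prod>i<n. ?f i) * (\<Prod>i<n. ?f i) = 1" by (simp add: prod.distrib[symmetric])
  then have "of_int (\<Prod>i<n. ?f i) * of_int (\<Prod>i<n. ?f i) = (1::'k)" by (metis of_int_1 of_int_mult)
  then show ?thesis unfolding e by auto
qed


lemma matrix_entry_closed: "M \<in> carrier (matrix_ring A n) \<Longrightarrow> i < n \<Longrightarrow> j < n \<Longrightarrow> M i j \<in> carrier A"
  unfolding matrix_ring_def by simp

lemma matrix_entry_outside: "M \<in> carrier (matrix_ring A n) \<Longrightarrow> \<not> (i < n \<and> j < n) \<Longrightarrow> M i j = \<zero>\<^bsub>A\<^esub>"
  unfolding matrix_ring_def by simp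

lemma matrix_entry_gr_elem:
  "U \<in> carrier (matrix_ring (group_ring G) n) \<Longrightarrow> i < n \<Longrightarrow> j < n \<Longrightarrow> gr_elem G (U i j)"
  using matrix_entry_closed gr_carrier by blast

lemma matrix_mult_group_ring:
  assumes G: "group G"
    and U: "U \<in> carrier (matrix_ring (group_ring G) n)" and V: "V \<in> carrier (matrix_ring (group_ring G) n)"
  shows "(U \<otimes>\<^bsub>matrix_ring (group_ring G) n\<^esub> V) i j =
     (if i < n \<and> j < n then (\<lambda>g. \<Sum>k<n. conv G (U i k) (V k j) g) else (\<lambda>g. 0))"
proof -
  have mult: "(U \<otimes>\<^bsub>matrix_ring (group_ring G) n\<^esub> V) i j = (if i < n \<and> j < n then
      finsum (group_ring G) (\<lambda>k. U i k \<otimes>\<^bsub>group_ring G\<^esub> V k j) {..<n} else \<zero>\<^bsub>group_ring G\<^esub>)"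
    by (simp add: matrix_ring_def)
  show ?thesis
  proof (cases "i < n \<and> j < n")
    case True
    have "finsum (group_ring G) (\<lambda>k. U i k \<otimes>\<^bsub>group_ring G\<^esub> V k j) {..<n} =
        (\<lambda>g. \<Sum>k<n. conv G (U i k) (V k j) g)"
      unfolding gr_mult
      by (rule finsum_group_ring)
        (use True in \<open>auto intro!: group.gr_elem_conv[OF G] matrix_entry_gr_elem[OF U] matrix_entry_gr_elem[OF V]\<close>)
    then show ?thesis unfolding mult if_P[OF True] .
  next
    case False
    then show ?thesis unfolding mult if_not_P[OF False] gr_zero by simp
  qed
qed

lemma matrix_one_group_ring:
  "\<one>\<^bsub>matrix_ring (group_ring G) n\<^esub> i j = (if i < n \<and> j = i then gr_unit G else (\<lambda>g. 0))"
  by (simp add: matrix_ring_def gr_one gr_zero)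

lemma matrix_mult_closed_group_ring:
  assumes G: "group G"
    and U: "U \<in> carrier (matrix_ring (group_ring G) n)" and V: "V \<in> carrier (matrix_ring (group_ring G) n)"
  shows "U \<otimes>\<^bsub>matrix_ring (group_ring G) n\<^esub> V \<in> carrier (matrix_ring (group_ring G) n)"
proof -
  have carrier: "carrier (matrix_ring (group_ring G) n) = {M. (\<forall>i j. i < n \<and> j < n \<longrightarrow> gr_elem G (M i j)) \<and>
      (\<forall>i j. \<not> (i < n \<and> j < n) \<longrightarrow> M i j = (\<lambda>g. 0))}"
    by (simp add: matrix_ring_def gr_carrier gr_zero)
  have "gr_elem G ((U \<otimes>\<^bsub>matrix_ring (group_ring G) n\<^esub> V) i j)" if "i < n" "j < n" for i j
    unfolding matrix_mult_group_ring[OF G U V] using that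
    by (auto intro!: gr_elem_sum group.gr_elem_conv[OF G] matrix_entry_gr_elem[OF U] matrix_entry_gr_elem[OF V])
  moreover have "(U \<otimes>\<^bsub>matrix_ring (group_ring G) n\<^esub> V) i j = (\<lambda>g. 0)" if "\<not> (i < n \<and> j < n)" for i j
    by (simp only: matrix_mult_group_ring[OF G U V] if_not_P[OF that])
  ultimately show ?thesis unfolding carrier by blast
qed

lemma matrix_one_closed_group_ring:
  fixes G :: "('g, 'b) monoid_scheme"
  assumes "group G"
  shows "\<one>\<^bsub>matrix_ring (group_ring G :: ('g \<Rightarrow> 'k::division_ring) ring) n\<^esub>
    \<in> carrier (matrix_ring (group_ring G :: ('g \<Rightarrow> 'k) ring) n)"
proof -
  have "gr_elem G (gr_unit G :: 'g \<Rightarrow> 'k)"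
    by (rule group.gr_elem_unit[OF assms])
  then show ?thesis by (simp add: matrix_ring_def gr_one gr_zero gr_carrier gr_elem_zero)
qed

lemma directly_finite_inj_hom:
  assumes "directly_finite B" "f \<in> hom A B" "inj_on f (carrier A)" "f \<one>\<^bsub>A\<^esub> = \<one>\<^bsub>B\<^esub>"
    and "\<one>\<^bsub>A\<^esub> \<in> carrier A" "\<And>a b. a \<in> carrier A \<Longrightarrow> b \<in> carrier A \<Longrightarrow> a \<otimes>\<^bsub>A\<^esub> b \<in> carrier A"
  shows "directly_finite A"
  unfolding directly_finite_def
proof (intro ballI impI)
  fix a b assume a: "a \<in> carrier A" and b: "b \<in> carrier A" and ab: "a \<otimes>\<^bsub>A\<^esub> b = \<one>\<^bsub>A\<^esub>"
  have "f a \<otimes>\<^bsub>B\<^esub> f b = \<one>\<^bsub>B\<^esub>"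
    using hom_mult[OF assms(2) a b] ab assms(4) by simp
  then have "f b \<otimes>\<^bsub>B\<^esub> f a = \<one>\<^bsub>B\<^esub>"
    using assms(1) hom_in_carrier[OF assms(2)] a b unfolding directly_finite_def by blast
  then have "f (b \<otimes>\<^bsub>A\<^esub> a) = f \<one>\<^bsub>A\<^esub>"
    using hom_mult[OF assms(2) b a] assms(4) by simp
  then show "b \<otimes>\<^bsub>A\<^esub> a = \<one>\<^bsub>A\<^esub>"
    using inj_onD[OF assms(3)] assms(5,6) a b by blast
qed

locale matrix_embedding =
  fixes G :: "('g, 'b) monoid_scheme" and n q :: nat and c :: "'k::division_ring"
  assumes group: "group G" and n_pos: "0 < n" and q_ge_2: "2 \<le> q"
    and scale_inverse: "of_int (int q ^ n) * c = 1"
begin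

abbreviation (input) M where "M \<equiv> matrix_ring (group_ring G :: ('g \<Rightarrow> 'k) ring) n"
abbreviation (input) W where "W \<equiv> G \<times>\<times> wreath n q"

definition embedding :: "(nat \<Rightarrow> nat \<Rightarrow> 'g \<Rightarrow> 'k) \<Rightarrow> 'g \<times> nat \<Rightarrow> 'k" where
  "embedding U = munit_sum n q (\<lambda>i j g. c * U i j g) (\<lambda>g. c * gr_unit G g)"

lemma q_pos: "0 < q"
  using q_ge_2 by simp

lemma scale_central: "z * c = c * z"
  using inverse_of_int_commute[of "int q ^ n" z] inverse_unique[OF scale_inverse] by simp

lemma gr_elem_scaled_unit: "gr_elem G (\<lambda>g. c * gr_unit G g)"
  by (intro gr_elem_smult group.gr_elem_unit group)

lemma gr_elem_scaled_entry: "U \<in> carrier M \<Longrightarrow> i < n \<Longrightarrow> j < n \<Longrightarrow> gr_elem G (\<lambda>g. c * U i j g)"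
  by (intro gr_elem_smult matrix_entry_gr_elem)

lemma conv_scaled: "gr_elem G U \<Longrightarrow> conv G (\<lambda>g. c * U g) (\<lambda>g. c * V g) = (\<lambda>g. c * (c * conv G U V g))"
  by (simp add: conv_smult_left gr_elem_finite conv_smult_right scale_central)

lemma embedding_closed: "U \<in> carrier M \<Longrightarrow> embedding U \<in> carrier (group_ring W)"
  unfolding embedding_def gr_carrier mem_Collect_eq
  by (intro gr_elem_munit_sum n_pos q_pos gr_elem_scaled_entry gr_elem_scaled_unit)

lemma embedding_mult:
  assumes U: "U \<in> carrier M" and V: "V \<in> carrier M"
  shows "conv W (embedding U) (embedding V) = embedding (U \<otimes>\<^bsub>M\<^esub> V)"
proof -
  let ?D = "of_int (int q ^ n) :: 'k"
  have "conv W (embedding U) (embedding V) =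
      munit_sum n q (\<lambda>i l g. ?D * (\<Sum>j<n. conv G (\<lambda>g. c * U i j g) (\<lambda>g. c * V j l g) g))
        (\<lambda>g. ?D * conv G (\<lambda>g. c * gr_unit G g) (\<lambda>g. c * gr_unit G g) g)"
    unfolding embedding_def
    by (rule conv_munit_sum[OF group n_pos q_pos gr_elem_scaled_entry[OF U] gr_elem_scaled_unit])
  also have "\<dots> = embedding (U \<otimes>\<^bsub>M\<^esub> V)"
    unfolding embedding_def
  proof (rule munit_sum_cong)
    fix i l assume il: "i < n" "l < n"
    have "(\<Sum>j<n. conv G (\<lambda>g. c * U i j g) (\<lambda>g. c * V j l g) g) = c * (c * (\<Sum>j<n. conv G (U i j) (V j l) g))"
      for g using il by (simp add: conv_scaled matrix_entry_gr_elem[OF U] sum_distrib_left)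
    then show "(\<lambda>g. ?D * (\<Sum>j<n. conv G (\<lambda>g. c * U i j g) (\<lambda>g. c * V j l g) g)) = (\<lambda>g. c * (U \<otimes>\<^bsub>M\<^esub> V) i l g)"
      using il scale_inverse by (simp add: matrix_mult_group_ring[OF group U V] mult.assoc[symmetric])
  next
    have "conv G (gr_unit G) (gr_unit G) = (gr_unit G :: 'g \<Rightarrow> 'k)"
      by (rule group.conv_unit_left[OF group group.gr_elem_unit[OF group]])
    then show "(\<lambda>g. ?D * conv G (\<lambda>g. c * gr_unit G g) (\<lambda>g. c * gr_unit G g) g) = (\<lambda>g. c * gr_unit G g)"
      using scale_inverse by (simp add: conv_scaled group.gr_elem_unit[OF group] mult.assoc[symmetric])
  qed
  finally show ?thesis .
qed

lemma embedding_one: "embedding \<one>\<^bsub>M\<^esub> = \<one>\<^bsub>group_ring W\<^esub>"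
proof -
  have "embedding \<one>\<^bsub>M\<^esub> = munit_sum n q (\<lambda>i l. if i = l then (\<lambda>g. c * gr_unit G g) else (\<lambda>g. 0)) (\<lambda>g. c * gr_unit G g)"
    unfolding embedding_def by (rule munit_sum_cong) (auto simp: matrix_one_group_ring)
  also have "\<dots> = tensor (\<lambda>g. of_int (int q ^ n) * (c * gr_unit G g)) (gr_unit (wreath n q))"
    by (rule munit_sum_diag[OF n_pos])
  also have "\<dots> = \<one>\<^bsub>group_ring W\<^esub>"
    using scale_inverse by (auto simp: mult.assoc[symmetric] tensor_def gr_one gr_unit_def fun_eq_iff)
  finally show ?thesis .
qed

lemma inj_on_embedding: "inj_on embedding (carrier M)"
proof (rule inj_onI)
  fix U V assume U: "U \<in> carrier M" and V: "V \<in> carrier M" and eq: "embedding U = embedding V"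
  let ?D = "of_int (int q ^ n) :: 'k"
  have D: "?D \<noteq> 0" and c: "c \<noteq> 0"
    using scale_inverse by (metis mult_zero_left zero_neq_one, metis mult_zero_right zero_neq_one)
  have "U i l g = V i l g" if il: "i < n" "l < n" for i l g
  proof - \<comment> \<open>sandwiching between elementary matrices moves the entry \<open>(i, l)\<close> to the corner \<open>E\<^sub>0\<^sub>0\<close>\<close>
    let ?L = "munit_sum n q (elem_matrix G 0 i) (\<lambda>g. 0)"
    let ?R = "munit_sum n q (elem_matrix G l 0) (\<lambda>g. 0)"
    have "conv W (conv W ?L (embedding U)) ?R = tensor (\<lambda>g. ?D * (?D * (c * U i l g))) (munit n q 0 0)"
      unfolding embedding_def
      by (rule conv_munit_sum_sandwich[OF group n_pos q_pos il gr_elem_scaled_entry[OF U]])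
    moreover have "conv W (conv W ?L (embedding V)) ?R = tensor (\<lambda>g. ?D * (?D * (c * V i l g))) (munit n q 0 0)"
      unfolding embedding_def
      by (rule conv_munit_sum_sandwich[OF group n_pos q_pos il gr_elem_scaled_entry[OF V]])
    ultimately have "tensor (\<lambda>g. ?D * (?D * (c * U i l g))) (munit n q 0 0) (g, wr_enc n (0, wr_witness n)) =
        tensor (\<lambda>g. ?D * (?D * (c * V i l g))) (munit n q 0 0) (g, wr_enc n (0, wr_witness n))"
      unfolding eq by simp
    then have "?D * (?D * (c * U i l g)) = ?D * (?D * (c * V i l g))"
      using munit_witness_nonzero[OF n_pos q_ge_2, where 'k='k]
      by (simp only: tensor_def fst_conv snd_conv mult_cancel_right simp_thms)
    then show ?thesis using D c by (simp only: mult_cancel_left simp_thms)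
  qed
  moreover have "U i l = V i l" if "\<not> (i < n \<and> l < n)" for i l
    using matrix_entry_outside[OF U that] matrix_entry_outside[OF V that] by simp
  ultimately show "U = V"
    by (intro ext) (metis (full_types))
qed

lemma directly_finite_matrix_ring:
  assumes "directly_finite (group_ring W :: ('g \<times> nat \<Rightarrow> 'k) ring)"
  shows "directly_finite M"
proof (rule directly_finite_inj_hom[where f = embedding])
  show "embedding \<in> hom M (group_ring W)"
    by (rule homI) (simp_all add: embedding_closed embedding_mult gr_mult)
qed (simp_all add: assms inj_on_embedding embedding_one matrix_one_closed_group_ring
       matrix_mult_closed_group_ring group)

end

lemma exists_of_nat_nonzero: "\<exists>q::nat. 2 \<le> q \<and> of_nat q \<noteq> (0::'a::ring_1)"
proof (cases "of_nat 2 = (0::'a)")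
  case True
  have "(of_nat 3 :: 'a) = of_nat (Suc 2)" by simp
  also have "\<dots> = 1 + of_nat 2" by (rule of_nat_Suc)
  also have "\<dots> = 1" by (simp only: True add_0_right)
  finally show ?thesis by (intro exI[of _ 3]) simp
next
  case False
  then show ?thesis by (intro exI[of _ 2]) simp
qed

theorem theorem3p3:
  fixes \<Gamma> :: "('g, 'b) monoid_scheme"
  assumes "group \<Gamma>"
    and "\<forall>H :: nat monoid. group H \<and> finite (carrier H) \<longrightarrow>
           directly_finite (group_ring (\<Gamma> \<times>\<times> H) :: ('g \<times> nat \<Rightarrow> 'k::division_ring) ring)"
  shows "stably_finite (group_ring \<Gamma> :: ('g \<Rightarrow> 'k) ring)"
  unfolding stably_finite_def
proof (intro allI impI)
  fix n :: nat assume "1 \<le> n"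
  obtain q :: nat where q: "2 \<le> q" "of_nat q \<noteq> (0::'k)"
    using exists_of_nat_nonzero by blast
  interpret matrix_embedding \<Gamma> n q "inverse (of_int (int q ^ n)) :: 'k"
    using assms(1) \<open>1 \<le> n\<close> q by (intro matrix_embedding.intro) auto
  have "directly_finite (group_ring (\<Gamma> \<times>\<times> wreath n q) :: ('g \<times> nat \<Rightarrow> 'k) ring)"
    using assms(2) group_wreath[OF n_pos q_pos] finite_wreath by blast
  then show "directly_finite (matrix_ring (group_ring \<Gamma> :: ('g \<Rightarrow> 'k) ring) n)"
    by (rule directly_finite_matrix_ring)
qed

end
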